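(* Let $p\colon G(J)\to D'(K)$ be a realizable puzzle, $J=(j_1,\dots,j_m)$, and write $p(\mathbf 1)=(\mathbf a_1\ \cdots\ \mathbf a_m)$ for $\mathbf 1=(1,\dots,1)$. For each $v\in[m]$ and each $2\le a\le j_v$, let $\mathbf h$ be the vertex of $G(J)$ with $h_v=a$ and $h_i=1$ for $i\ne v$; the subpuzzle on the edge $\{\mathbf 1,\mathbf h\}$ is realizable by a characteristic map over $\operatorname{wed}_vK$ whose projection at $v_2$ (corresponding to $\mathbf 1$) is $p(\mathbf 1)$, and we fix for it a standard form, i.e. a representative whose columns labeled $1,\dots,v-1,v_1,v_2,v+1,\dots,m$ are $(\mathbf a_i; e^{a}_{v,i})$ for $i\ne v$, $(\mathbf a_v;-1)$ and $(0;1)$, with $e^a_{v,i}\in R$. Define the block matrices $A_i=(\mathbf a_i\ 0\ \cdots\ 0)$ of size $n\times j_i$; $S_i$ of size $(j_i-1)\times j_i$ whose row $t$ ($1\le t\le j_i-1$) has $-1$ in column $1$, $1$ in column $t+1$ and $0$ elsewhere; and $E_{k,i}$ ($k\ne i$) of size $(j_k-1)\times j_i$ whose first column is $(e^2_{k,i},e^3_{k,i},\dots,e^{j_k}_{k,i})^T$ and other columns are zero. Then the matrix $$\Lambda=\begin{pmatrix} A_1&A_2&\cdots&A_m\\ S_1&E_{1,2}&\cdots&E_{1,m}\\ E_{2,1}&S_2&\cdots&E_{2,m}\\ \vdots&&\ddots&\vdots\\ E_{m,1}&\cdots&E_{m,m-1}&S_m\end{pmatrix},$$ with columns labeled $1_1,\dots,1_{j_1},2_1,\dots,2_{j_2},\dots,m_1,\dots,m_{j_m}$,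 is an $R$-characteristic map over $K(J)$ realizing $p$. In particular, a realizable puzzle is uniquely determined by $p(\mathbf 1)$ and the values $p(\boldsymbol\alpha)$ at the vertices $\boldsymbol\alpha$ adjacent to $\mathbf 1$.
   Context: Let $R\in\{\mathbb Z,\mathbb Z_2\}$; an $R$-basis of $R^n$ is a $\mathbb Z$-basis of $\mathbb Z^n$ ($R=\mathbb Z$) or a basis of $\mathbb Z_2^n$ ($R=\mathbb Z_2$). $K$ is an $(n-1)$-dimensional star-shaped simplicial sphere on $[m]$. An $R$-characteristic map over a complex with $(N-1)$-dimensional facets is a map from its vertices to $R^N$ sending each $(N-1)$-face to an $R$-basis, written as the matrix of its columns; D-J equivalence is equality up to left multiplication by $GL_N(R)$. For a face $\sigma$, $\operatorname{proj}_\sigma\lambda$ is the characteristic map on $\operatorname{link}\sigma$ given by $w\mapsto[\lambda(w)]\in R^N/\langle\lambda(u):u\in\sigma\rangle$, up to D-J equivalence. For $J=(j_1,\dots,j_m)\in\mathbb Z_{>0}^m$, $K(J)$ is the complex on vertices $\{i_k:1\le i\le m,1\le k\le j_i\}$ whose minimal non-faces are the sets $\bigcup_{i\in\tau}\{i_1,\dots,i_{j_i}\}$ for $\tau$ a minimal non-face of $K$; $\operatorname{wed}_vK=K(J)$ with $j_v=2$, $j_i=1$ otherwise (vertices $v_1,v_2$; $i_1$ written $i$). $I(J)=\{\boldsymbol\alpha\in\mathbb Z^m:1\le\alpha_i\le j_i\}$. For $\boldsymbol\alpha\in I(J)$, $\sigma(\boldsymbol\alpha)$ is the set of all vertices of $K(J)$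 except $1_{\alpha_1},\dots,m_{\alpha_m}$; it is a face, and $\operatorname{link}_{K(J)}\sigma(\boldsymbol\alpha)$ is identified with $K$ via $i_{\alpha_i}\mapsto i$. The pre-diagram $D'(K)$ is the edge-colored multigraph (loops allowed) whose vertices are D-J classes of $R$-characteristic maps over $K$, with an edge colored $v$ between $\lambda_1,\lambda_2$ iff some $R$-characteristic map $\Lambda$ over $\operatorname{wed}_vK$ has $\operatorname{proj}_{v_1}\Lambda=\lambda_1$, $\operatorname{proj}_{v_2}\Lambda=\lambda_2$ (via the identifications above). $G(J)$ is the $1$-skeleton of $\Delta^{j_1-1}\times\cdots\times\Delta^{j_m-1}$, with vertex set $I(J)$, two vertices adjacent iff they differ in exactly one coordinate $v$, such an edge being colored $v$. A puzzle of $(K,J)$ is a color-preserving graph homomorphism $p:G(J)\to D'(K)$. For an $R$-characteristic map $\Lambda$ over $K(J)$, the map $\boldsymbol\alpha\mapsto\operatorname{proj}_{\sigma(\boldsymbol\alpha)}\Lambda$ is a puzzle; puzzles of this form are called realizable (realized by $\Lambda$). For nonempty $S_i\subseteq[j_i]$, the restriction of $p$ to the induced subgraph on $\prod S_i$, identified with $G(J')$ ($j'_i=|S_i|$) via order-preserving bijections, is a subpuzzle, itself a puzzle of $(K,J')$. *)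

theory Defs
  imports Complex_Main
begin

text \<open>Vectors of R^N are functions nat => 'r vanishing at every index >= N
 (coordinates are 0,...,N-1).  The coefficient ring R is a type 'r, which is
 required to be isomorphic to Z (of_int bijective) or to Z_2 (exactly two
 elements).\<close>

definition R_ring :: "'r::comm_ring_1 itself \<Rightarrow> bool" where
  "R_ring _ \<longleftrightarrow> bij (of_int :: int \<Rightarrow> 'r) \<or> card (UNIV :: 'r set) = 2"

definition vecs :: "nat \<Rightarrow> (nat \<Rightarrow> 'r::zero) set" where
  "vecs N = {x. \<forall>i. N \<le> i \<longrightarrow> x i = 0}"

definition lincomb :: "('v \<Rightarrow> nat \<Rightarrow> 'r::comm_ring_1) \<Rightarrow> 'v set \<Rightarrow> ('v \<Rightarrow> 'r) \<Rightarrow> nat \<Rightarrow> 'r" where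
  "lincomb lam S c = (\<lambda>k. \<Sum>u\<in>S. c u * lam u k)"

definition is_basis :: "nat \<Rightarrow> ('v \<Rightarrow> nat \<Rightarrow> 'r::comm_ring_1) \<Rightarrow> 'v set \<Rightarrow> bool" where
  "is_basis N lam S \<longleftrightarrow>
     bij_betw (lincomb lam S) {c. \<forall>u. u \<notin> S \<longrightarrow> c u = 0} (vecs N)"

definition rspan :: "('v \<Rightarrow> nat \<Rightarrow> 'r::comm_ring_1) \<Rightarrow> 'v set \<Rightarrow> (nat \<Rightarrow> 'r) set" where
  "rspan lam S = {lincomb lam S c | c. True}"

definition mv :: "nat \<Rightarrow> nat \<Rightarrow> (nat \<Rightarrow> nat \<Rightarrow> 'r::comm_ring_1) \<Rightarrow> (nat \<Rightarrow> 'r) \<Rightarrow> nat \<Rightarrow> 'r" where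
  "mv M N U x = (\<lambda>i. if i < M then (\<Sum>j<N. U i j * x j) else 0)"

definition GLmat :: "nat \<Rightarrow> (nat \<Rightarrow> nat \<Rightarrow> 'r::comm_ring_1) \<Rightarrow> bool" where
  "GLmat N U \<longleftrightarrow> (\<exists>W. \<forall>x\<in>vecs N. mv N N W (mv N N U x) = x \<and> mv N N U (mv N N W x) = x)"

definition simplicial_complex_on :: "nat \<Rightarrow> nat set set \<Rightarrow> bool" where
  "simplicial_complex_on m K \<longleftrightarrow>
     K \<subseteq> Pow {1..m} \<and> {} \<in> K \<and> (\<forall>\<sigma>\<in>K. \<forall>\<tau>. \<tau> \<subseteq> \<sigma> \<longrightarrow> \<tau> \<in> K) \<and> (\<forall>i\<in>{1..m}. {i} \<in> K)"

definition minimal_nonface :: "nat \<Rightarrow> nat set set \<Rightarrow> nat set \<Rightarrow> bool" where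
  "minimal_nonface m K \<tau> \<longleftrightarrow> \<tau> \<subseteq> {1..m} \<and> \<tau> \<notin> K \<and> (\<forall>\<rho>. \<rho> \<subset> \<tau> \<longrightarrow> \<rho> \<in> K)"

definition conv_pts :: "(nat \<Rightarrow> nat \<Rightarrow> real) \<Rightarrow> nat set \<Rightarrow> (nat \<Rightarrow> real) set" where
  "conv_pts x S = {y. \<exists>t. (\<forall>u\<in>S. 0 \<le> t u) \<and> (\<Sum>u\<in>S. t u) = 1 \<and> y = (\<lambda>k. \<Sum>u\<in>S. t u * x u k)}"

definition aff_indep_pts :: "(nat \<Rightarrow> nat \<Rightarrow> real) \<Rightarrow> nat set \<Rightarrow> bool" where
  "aff_indep_pts x S \<longleftrightarrow> (\<forall>c. (\<Sum>u\<in>S. c u) = 0 \<and> (\<lambda>k. \<Sum>u\<in>S. c u * x u k) = (\<lambda>k. 0)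
        \<longrightarrow> (\<forall>u\<in>S. c u = 0))"

definition geom_realization :: "nat \<Rightarrow> nat set set \<Rightarrow> (nat \<Rightarrow> nat \<Rightarrow> real) \<Rightarrow> bool" where
  "geom_realization n K x \<longleftrightarrow>
     (\<forall>u. x u \<in> vecs n) \<and> (\<forall>\<sigma>\<in>K. aff_indep_pts x \<sigma>) \<and>
     (\<forall>\<sigma>\<in>K. \<forall>\<tau>\<in>K. conv_pts x \<sigma> \<inter> conv_pts x \<tau> = conv_pts x (\<sigma> \<inter> \<tau>))"

definition polyhedron :: "nat set set \<Rightarrow> (nat \<Rightarrow> nat \<Rightarrow> real) \<Rightarrow> (nat \<Rightarrow> real) set" where
  "polyhedron K x = (\<Union>\<sigma>\<in>K. conv_pts x \<sigma>)"

definition star_shaped_sphere :: "nat \<Rightarrow> nat \<Rightarrow> nat set set \<Rightarrow> bool" where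
  "star_shaped_sphere n m K \<longleftrightarrow>
     simplicial_complex_on m K \<and> (\<forall>\<sigma>\<in>K. card \<sigma> \<le> n) \<and> (\<exists>\<sigma>\<in>K. card \<sigma> = n) \<and>
     (\<exists>x p. geom_realization n K x \<and> p \<in> vecs n \<and>
        (\<forall>d\<in>vecs n. d \<noteq> (\<lambda>k. 0) \<longrightarrow>
           (\<exists>!y. y \<in> polyhedron K x \<and> (\<exists>t::real. 0 \<le> t \<and> y = (\<lambda>k. p k + t * d k)))))"

definition charmap :: "nat \<Rightarrow> 'v set set \<Rightarrow> ('v \<Rightarrow> nat \<Rightarrow> 'r::comm_ring_1) \<Rightarrow> bool" where
  "charmap N L lam \<longleftrightarrow>
     (\<forall>v\<in>\<Union>L. lam v \<in> vecs N) \<and> (\<forall>\<sigma>\<in>L. card \<sigma> = N \<longrightarrow> is_basis N lam \<sigma>)"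

definition DJclass :: "nat \<Rightarrow> 'v set \<Rightarrow> ('v \<Rightarrow> nat \<Rightarrow> 'r::comm_ring_1) \<Rightarrow> ('v \<Rightarrow> nat \<Rightarrow> 'r) set" where
  "DJclass N V lam = {mu. (\<forall>v. v \<notin> V \<longrightarrow> mu v = (\<lambda>k. 0)) \<and>
       (\<exists>U. GLmat N U \<and> (\<forall>v\<in>V. mu v = mv N N U (lam v)))}"

definition DVert :: "nat \<Rightarrow> nat \<Rightarrow> nat set set \<Rightarrow> (nat \<Rightarrow> nat \<Rightarrow> 'r::comm_ring_1) set set" where
  "DVert n m K = {DJclass n {1..m} lam | lam. charmap n K lam}"

text \<open>The complex K(J), with vertices (i,k) standing for i_k.\<close>
definition VJ :: "nat \<Rightarrow> (nat \<Rightarrow> nat) \<Rightarrow> (nat \<times> nat) set" where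
  "VJ m J = {(i, k). i \<in> {1..m} \<and> 1 \<le> k \<and> k \<le> J i}"

definition KJ :: "nat \<Rightarrow> nat set set \<Rightarrow> (nat \<Rightarrow> nat) \<Rightarrow> (nat \<times> nat) set set" where
  "KJ m K J = {\<sigma>. \<sigma> \<subseteq> VJ m J \<and>
      (\<forall>\<tau>. minimal_nonface m K \<tau> \<longrightarrow> \<not> (\<Union>i\<in>\<tau>. {(i, k) | k. 1 \<le> k \<and> k \<le> J i}) \<subseteq> \<sigma>)}"

definition NJ :: "nat \<Rightarrow> nat \<Rightarrow> (nat \<Rightarrow> nat) \<Rightarrow> nat" where
  "NJ n m J = n + (\<Sum>i\<in>{1..m}. J i - 1)"

text \<open>J for the wedge wed_v K = K(J) with j_v = 2, others 1: v_1 = (v,1), v_2 = (v,2), i = (i,1).\<close>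
definition wedJ :: "nat \<Rightarrow> nat \<Rightarrow> nat" where
  "wedJ v = (\<lambda>i. if i = v then 2 else 1)"

definition IJ :: "nat \<Rightarrow> (nat \<Rightarrow> nat) \<Rightarrow> (nat \<Rightarrow> nat) set" where
  "IJ m J = {\<alpha>. (\<forall>i\<in>{1..m}. 1 \<le> \<alpha> i \<and> \<alpha> i \<le> J i) \<and> (\<forall>i. i \<notin> {1..m} \<longrightarrow> \<alpha> i = 1)}"

definition one_idx :: "nat \<Rightarrow> nat" where
  "one_idx = (\<lambda>i. 1)"

definition sigmaJ :: "nat \<Rightarrow> (nat \<Rightarrow> nat) \<Rightarrow> (nat \<Rightarrow> nat) \<Rightarrow> (nat \<times> nat) set" where
  "sigmaJ m J \<alpha> = VJ m J - {(i, \<alpha> i) | i. i \<in> {1..m}}"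

text \<open>proj_sigma Lam, for Lam a map into R^N and a face sigma whose link is identified with K
 via iota, as a D-J class of maps [m] -> R^n: compose Lam with a surjective linear map
 R^N -> R^n whose kernel is the span of Lam(sigma) (i.e. an identification of the quotient
 R^N / <Lam(u) : u in sigma> with R^n).\<close>
definition projK :: "nat \<Rightarrow> nat \<Rightarrow> nat \<Rightarrow> ('v \<Rightarrow> nat \<Rightarrow> 'r::comm_ring_1) \<Rightarrow> 'v set
     \<Rightarrow> (nat \<Rightarrow> 'v) \<Rightarrow> (nat \<Rightarrow> nat \<Rightarrow> 'r) set" where
  "projK n m N Lam \<sigma> iota = {mu. (\<forall>i. i \<notin> {1..m} \<longrightarrow> mu i = (\<lambda>k. 0)) \<and>
      (\<exists>\<phi>. mv n N \<phi> ` vecs N = vecs n \<and> {x \<in> vecs N. mv n N \<phi> x = (\<lambda>k. 0)} = rspan Lam \<sigma> \<and>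
           (\<forall>i\<in>{1..m}. mu i = mv n N \<phi> (Lam (iota i))))}"

text \<open>proj_{sigma(alpha)} Lam for Lam over K(J), with link sigma(alpha) identified with K
 via i_{alpha_i} |-> i.\<close>
definition projJ :: "nat \<Rightarrow> nat \<Rightarrow> (nat \<Rightarrow> nat) \<Rightarrow> (nat \<times> nat \<Rightarrow> nat \<Rightarrow> 'r::comm_ring_1)
     \<Rightarrow> (nat \<Rightarrow> nat) \<Rightarrow> (nat \<Rightarrow> nat \<Rightarrow> 'r) set" where
  "projJ n m J Lam \<alpha> = projK n m (NJ n m J) Lam (sigmaJ m J \<alpha>) (\<lambda>i. (i, \<alpha> i))"

text \<open>Edge colored v of D'(K) from c1 = proj_{v_1} Lam to c2 = proj_{v_2} Lam.\<close>
definition Dedge :: "nat \<Rightarrow> nat \<Rightarrow> nat set set \<Rightarrow> nat \<Rightarrow> (nat \<Rightarrow> nat \<Rightarrow> 'r::comm_ring_1) set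
     \<Rightarrow> (nat \<Rightarrow> nat \<Rightarrow> 'r) set \<Rightarrow> bool" where
  "Dedge n m K v c1 c2 \<longleftrightarrow> (\<exists>Lam. charmap (n + 1) (KJ m K (wedJ v)) Lam \<and>
      projJ n m (wedJ v) Lam (one_idx(v := 2)) = c1 \<and> projJ n m (wedJ v) Lam one_idx = c2)"

text \<open>A puzzle: colour-preserving graph homomorphism G(J) -> D'(K) (edges are unordered).\<close>
definition puzzle :: "nat \<Rightarrow> nat \<Rightarrow> nat set set \<Rightarrow> (nat \<Rightarrow> nat)
     \<Rightarrow> ((nat \<Rightarrow> nat) \<Rightarrow> (nat \<Rightarrow> nat \<Rightarrow> 'r::comm_ring_1) set) \<Rightarrow> bool" where
  "puzzle n m K J p \<longleftrightarrow>
     (\<forall>\<alpha>\<in>IJ m J. p \<alpha> \<in> DVert n m K) \<and>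
     (\<forall>\<alpha>\<in>IJ m J. \<forall>\<beta>\<in>IJ m J. \<forall>v\<in>{1..m}. \<alpha> v \<noteq> \<beta> v \<and> (\<forall>i. i \<noteq> v \<longrightarrow> \<alpha> i = \<beta> i) \<longrightarrow>
        Dedge n m K v (p \<alpha>) (p \<beta>) \<or> Dedge n m K v (p \<beta>) (p \<alpha>))"

definition realizes :: "nat \<Rightarrow> nat \<Rightarrow> (nat \<Rightarrow> nat) \<Rightarrow> (nat \<times> nat \<Rightarrow> nat \<Rightarrow> 'r::comm_ring_1)
     \<Rightarrow> ((nat \<Rightarrow> nat) \<Rightarrow> (nat \<Rightarrow> nat \<Rightarrow> 'r) set) \<Rightarrow> bool" where
  "realizes n m J Lam p \<longleftrightarrow> (\<forall>\<alpha>\<in>IJ m J. p \<alpha> = projJ n m J Lam \<alpha>)"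

definition realizable_puzzle :: "nat \<Rightarrow> nat \<Rightarrow> nat set set \<Rightarrow> (nat \<Rightarrow> nat)
     \<Rightarrow> ((nat \<Rightarrow> nat) \<Rightarrow> (nat \<Rightarrow> nat \<Rightarrow> 'r::comm_ring_1) set) \<Rightarrow> bool" where
  "realizable_puzzle n m K J p \<longleftrightarrow> puzzle n m K J p \<and>
     (\<exists>Lam. charmap (NJ n m J) (KJ m K J) Lam \<and> realizes n m J Lam p)"

text \<open>Standard form over wed_v K (columns i=(i,1) for i /= v, v_1=(v,1), v_2=(v,2); R^{n+1} has
 coordinates 0..n, the last one being n): columns (a_i; ev i), (a_v; -1), (0; 1).\<close>
definition stdform :: "nat \<Rightarrow> (nat \<Rightarrow> nat \<Rightarrow> 'r::comm_ring_1) \<Rightarrow> nat \<Rightarrow> (nat \<Rightarrow> 'r)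
     \<Rightarrow> nat \<times> nat \<Rightarrow> nat \<Rightarrow> 'r" where
  "stdform n a v ev = (\<lambda>(i, c) r.
     if r < n then (if i = v \<and> c = 2 then 0 else a i r)
     else if r = n then (if i = v then (if c = 1 then - 1 else 1) else ev i)
     else 0)"

text \<open>The standard form with last-row entries ev realizes the subpuzzle of p on the edge
 {1, h}, h = 1 with h_v = b (v_2 corresponding to 1, v_1 to h).\<close>
definition std_ok :: "nat \<Rightarrow> nat \<Rightarrow> nat set set \<Rightarrow> ((nat \<Rightarrow> nat) \<Rightarrow> (nat \<Rightarrow> nat \<Rightarrow> 'r::comm_ring_1) set)
     \<Rightarrow> (nat \<Rightarrow> nat \<Rightarrow> 'r) \<Rightarrow> nat \<Rightarrow> nat \<Rightarrow> (nat \<Rightarrow> 'r) \<Rightarrow> bool" where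
  "std_ok n m K p a v b ev \<longleftrightarrow>
     charmap (n + 1) (KJ m K (wedJ v)) (stdform n a v ev) \<and>
     projJ n m (wedJ v) (stdform n a v ev) one_idx = p one_idx \<and>
     projJ n m (wedJ v) (stdform n a v ev) (one_idx(v := 2)) = p (one_idx(v := b))"

text \<open>Rows of Lambda: 0..<n for the A-blocks; the block of row k (S_k, E_{k,i}) occupies rows
 blk_off n J k + (t-1), 1 <= t <= J k - 1.\<close>
definition blk_off :: "nat \<Rightarrow> (nat \<Rightarrow> nat) \<Rightarrow> nat \<Rightarrow> nat" where
  "blk_off n J k = n + (\<Sum>i\<in>{1..<k}. J i - 1)"

definition in_row :: "nat \<Rightarrow> (nat \<Rightarrow> nat) \<Rightarrow> nat \<Rightarrow> nat \<Rightarrow> nat \<Rightarrow> bool" where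
  "in_row n J k t r \<longleftrightarrow> 1 \<le> t \<and> t \<le> J k - 1 \<and> r = blk_off n J k + (t - 1)"

text \<open>e k b i stands for e^b_{k,i}.\<close>
definition blockLambda :: "nat \<Rightarrow> nat \<Rightarrow> (nat \<Rightarrow> nat) \<Rightarrow> (nat \<Rightarrow> nat \<Rightarrow> 'r::comm_ring_1)
     \<Rightarrow> (nat \<Rightarrow> nat \<Rightarrow> nat \<Rightarrow> 'r) \<Rightarrow> nat \<times> nat \<Rightarrow> nat \<Rightarrow> 'r" where
  "blockLambda n m J a e = (\<lambda>(i, c) r.
     if r < n then (if c = 1 then a i r else 0)
     else if (\<exists>k\<in>{1..m}. \<exists>t. in_row n J k t r) then
       (let (k, t) = (THE (k, t). k \<in> {1..m} \<and> in_row n J k t r) in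
         if k = i then (if c = 1 then - 1 else if c = t + 1 then 1 else 0)
         else (if c = 1 then e k (t + 1) i else 0))
     else 0)"

end

theory Submission
  imports Defs
begin

text \<open>Fix some realization \<Lambda>0 of the puzzle. Projecting it from \<sigma>(1) is a quotient map
  \<phi> : R^N \<rightarrow> R^n carrying \<Lambda>0 to the upper rows of \<Lambda>. For a vertex k_b with b \<ge> 2, the standard
  form over wed_k K tells how the projections of \<Lambda>0 from \<sigma>(1) and from \<sigma>(1(k := b)) differ;
  their difference, followed by a functional that is 1 at a_k, is a linear functional whose values
  on \<Lambda>0 form the row of \<Lambda> belonging to k_b. Stacking \<phi> and these functionals gives an
  automorphism of R^N carrying \<Lambda>0 to \<Lambda>, so \<Lambda> is a characteristic map realizing the puzzle.
  Since \<Lambda> is built from p(1) and the standard forms alone, two realizable puzzles agreeing at 1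
  and its neighbours are realized by the same \<Lambda>.

  A standard form is obtained by projecting \<Lambda>0 from \<sigma>(1) - {k_b}, using \<phi> for the first n
  coordinates and, for the last one, a functional that is dual to k_b on \<sigma>(1) and -1 at k_1.
  Both this functional and the one above need k to lie in a facet of K. This holds because a
  star-shaped sphere is pure: otherwise the faces through k would lie in hyperplanes through the
  star center, and a ray from the center slightly off the direction of k would miss the sphere.\<close>

section \<open>Purity of star-shaped spheres\<close>

definition dotp :: "nat \<Rightarrow> (nat \<Rightarrow> real) \<Rightarrow> (nat \<Rightarrow> real) \<Rightarrow> real" where
  "dotp n f v = (\<Sum>j<n. f j * v j)"

lemma dotp_add: "dotp n f (\<lambda>k. u k + v k) = dotp n f u + dotp n f v"
  unfolding dotp_def by (simp add: distrib_left sum.distrib)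

lemma dotp_diff: "dotp n f (\<lambda>k. u k - v k) = dotp n f u - dotp n f v"
  unfolding dotp_def by (simp add: right_diff_distrib sum_subtractf)

lemma dotp_smult: "dotp n f (\<lambda>k. c * v k) = c * dotp n f v"
  unfolding dotp_def by (simp add: sum_distrib_left ac_simps)

lemma dotp_sum: "dotp n f (\<lambda>k. \<Sum>u\<in>S. c u * v u k) = (\<Sum>u\<in>S. c u * dotp n f (v u))"
  unfolding dotp_def by (simp add: sum_distrib_left sum.swap[of _ "{..<n}"] ac_simps)

lemma dotp_zero [simp]: "dotp n f (\<lambda>k. 0) = 0"
  unfolding dotp_def by simp

text \<open>Gaussian elimination of the last coordinate, dually: extending f by a suitable last
  entry turns it into a functional on vectors whose last coordinate has been cleared with u.\<close>
lemma dotp_eliminate_last: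
  assumes "u n \<noteq> 0"
  shows "dotp (Suc n) (f(n := - dotp n f u / u n)) v = dotp n f (\<lambda>k. v k - v n / u n * u k)"
proof -
  have "dotp (Suc n) (f(n := - dotp n f u / u n)) v = dotp n f v - dotp n f u / u n * v n"
    unfolding dotp_def by simp
  also have "\<dots> = dotp n f (\<lambda>k. v k - v n / u n * u k)"
    by (simp only: dotp_diff dotp_smult) simp
  finally show ?thesis .
qed

lemma exists_annihilator:
  "finite V \<Longrightarrow> card V < n \<Longrightarrow> V \<subseteq> vecs n \<Longrightarrow>
    \<exists>f\<in>vecs n. f \<noteq> (\<lambda>k. 0) \<and> (\<forall>v\<in>V. dotp n f v = 0)"
proof (induction n arbitrary: V)
  case 0
  then show ?case by simp
next
  case (Suc n)
  show ?case
  proof (cases "\<forall>v\<in>V. v n = 0")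
    case True
    have "dotp (Suc n) (\<lambda>k. if k = n then 1 else 0) v = v n" for v unfolding dotp_def by simp
    then show ?thesis using True by (intro bexI[of _ "\<lambda>k. if k = n then 1 else 0"]) (auto simp: vecs_def fun_eq_iff)
  next
    case False
    then obtain v0 where v0: "v0 \<in> V" "v0 n \<noteq> 0" by blast
    define pr where "pr v = (\<lambda>k. v k - v n / v0 n * v0 k)" for v
    have "0 < card V" using Suc.prems(1) v0(1) card_gt_0_iff by blast
    then have "card (pr ` (V - {v0})) < n"
      using card_image_le[of "V - {v0}" pr] Suc.prems(1,2) v0(1) by (simp add: card_Diff_singleton)
    moreover have "pr v \<in> vecs n" if "v \<in> V" for v
      unfolding vecs_def
    proof (intro CollectI allI impI)
      fix i assume "n \<le> i"
      moreover have "v i = 0" "v0 i = 0" if "i \<noteq> n"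
        using \<open>n \<le> i\<close> that Suc.prems(3) \<open>v \<in> V\<close> v0(1) by (auto simp: vecs_def)
      ultimately show "pr v i = 0" using v0(2) by (cases "i = n") (auto simp: pr_def)
    qed
    then have "pr ` (V - {v0}) \<subseteq> vecs n" by blast
    ultimately obtain f where f: "f \<in> vecs n" "f \<noteq> (\<lambda>k. 0)" "\<forall>v\<in>V - {v0}. dotp n f (pr v) = 0"
      using Suc.IH[of "pr ` (V - {v0})"] Suc.prems(1) by auto
    define f' where "f' = f(n := - dotp n f v0 / v0 n)"
    have "dotp (Suc n) f' v = 0" if "v \<in> V" for v
      using that v0(2) f(3) dotp_eliminate_last[where u = v0 and n = n and f = f and v = v, OF v0(2)]
      unfolding f'_def pr_def
      by (cases "v = v0") auto
    moreover have "f' \<in> vecs (Suc n)" "f' \<noteq> (\<lambda>k. 0)"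
      using f(1,2) by (auto simp: f'_def vecs_def fun_eq_iff split: if_splits)
    ultimately show ?thesis by blast
  qed
qed

lemma exists_vector_off_hyperplanes:
  assumes "finite Fs" "\<forall>f\<in>Fs. f \<in> vecs n \<and> f \<noteq> (\<lambda>k. 0)"
  shows "\<exists>w\<in>vecs n. \<forall>f\<in>Fs. dotp n f w \<noteq> 0"
  using assms
proof (induction Fs rule: finite_induct)
  case empty
  then show ?case by (intro bexI[of _ "\<lambda>k. 0"]) (auto simp: vecs_def)
next
  case (insert g Fs)
  then obtain w where w: "w \<in> vecs n" "\<forall>f\<in>Fs. dotp n f w \<noteq> 0" by auto
  obtain j where j: "g j \<noteq> 0" using insert.prems by auto
  have jn: "j < n" using insert.prems j by (auto simp: vecs_def not_less)
  define e :: "nat \<Rightarrow> real" where "e = (\<lambda>k. if k = j then 1 else 0)"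
  have ge: "dotp n g e = g j" using jn unfolding dotp_def e_def by (simp add: if_distrib cong: if_cong)
  \<comment> \<open>along the line w + c e every functional is a nonzero affine function of c\<close>
  have roots: "{c. dotp n f w + c * dotp n f e = 0} \<subseteq> {- dotp n f w / dotp n f e}"
    if "f \<in> insert g Fs" for f
  proof (cases "dotp n f e = 0")
    case True
    then show ?thesis using that w(2) ge j by auto
  qed (auto simp: field_simps eq_neg_iff_add_eq_0)
  have "finite (\<Union>f\<in>insert g Fs. {c. dotp n f w + c * dotp n f e = 0})"
    using roots insert.hyps(1) by (auto intro: finite_subset)
  then obtain c where c: "\<forall>f\<in>insert g Fs. dotp n f w + c * dotp n f e \<noteq> 0"
    using ex_new_if_finite[OF infinite_UNIV_char_0] by blast
  have "(\<lambda>k. w k + c * e k) \<in> vecs n" using w(1) jn by (auto simp: vecs_def e_def)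
  then show ?case using c by (intro bexI[of _ "\<lambda>k. w k + c * e k"]) (auto simp: dotp_add dotp_smult)
qed

lemma bounded_seqs_convergent_subseq:
  fixes S :: "(nat \<Rightarrow> real) set"
  shows "finite S \<Longrightarrow> (\<forall>X\<in>S. Bseq X) \<Longrightarrow> \<exists>r. strict_mono r \<and> (\<forall>X\<in>S. convergent (\<lambda>j. X (r j)))"
proof (induction S rule: finite_induct)
  case empty
  then show ?case by (intro exI[of _ id]) (auto simp: strict_mono_def)
next
  case (insert X S)
  then obtain r where r: "strict_mono r" "\<forall>Y\<in>S. convergent (\<lambda>j. Y (r j))" by auto
  obtain f where f: "strict_mono f" "monoseq (\<lambda>n. X (r (f n)))" using seq_monosub[of "\<lambda>j. X (r j)"] by blast
  have "Bseq (\<lambda>n. X (r (f n)))" using insert.prems Bseq_subseq[of X "\<lambda>n. r (f n)"] by simp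
  then have cX: "convergent (\<lambda>n. X (r (f n)))" using f(2) by (rule Bseq_monoseq_convergent)
  have "convergent (\<lambda>j. Y (r (f j)))" if "Y \<in> S" for Y
    using convergent_subseq_convergent[OF r(2)[rule_format, OF that] f(1)] by (simp add: comp_def)
  moreover have "strict_mono (\<lambda>j. r (f j))" using strict_mono_o[OF r(1) f(1)] by (simp add: comp_def)
  ultimately show ?case using cX by (intro exI[of _ "\<lambda>j. r (f j)"]) auto
qed

lemma conv_pts_singleton: "conv_pts x {u} = {x u}"
  unfolding conv_pts_def by (auto intro!: exI[of _ "\<lambda>_. 1"])

lemma conv_pts_empty: "conv_pts x {} = {}"
  unfolding conv_pts_def by auto

lemma conv_pts_vertex:
  assumes "finite G" "u \<in> G"
  shows "x u \<in> conv_pts x G"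
proof -
  have "(\<Sum>v\<in>G. (if v = u then 1 else 0) * x v k) = (\<Sum>v\<in>G. if v = u then x v k else 0)" for k
    by (rule sum.cong) auto
  then have "(\<Sum>v\<in>G. (if v = u then 1 else 0) * x v k) = x u k" for k using assms by simp
  then show ?thesis unfolding conv_pts_def using assms by (intro CollectI exI[of _ "\<lambda>v. if v = u then 1 else 0"]) auto
qed

lemma ray_conv_param_bound:
  fixes x :: "nat \<Rightarrow> nat \<Rightarrow> real"
  assumes H: "finite H" and t: "0 \<le> t" and y: "(\<lambda>k. p k + t * d k) \<in> conv_pts x H"
    and \<delta>: "0 < \<delta>" "\<delta> \<le> \<bar>d r\<bar>"
  shows "t \<le> ((\<Sum>u\<in>H. \<bar>x u r\<bar>) + \<bar>p r\<bar>) / \<delta>"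
proof -
  obtain l where l: "\<forall>u\<in>H. 0 \<le> l u" "sum l H = 1" "(\<lambda>k. p k + t * d k) = (\<lambda>k. \<Sum>u\<in>H. l u * x u k)"
    using y unfolding conv_pts_def by blast
  have "t * \<delta> \<le> \<bar>t * d r\<bar>" using t \<delta> by (simp add: abs_mult mult_left_mono)
  also have "\<bar>t * d r\<bar> = \<bar>(\<Sum>u\<in>H. l u * x u r) - p r\<bar>" using fun_cong[OF l(3), of r] by simp
  also have "\<dots> \<le> \<bar>\<Sum>u\<in>H. l u * x u r\<bar> + \<bar>p r\<bar>" by (rule abs_triangle_ineq4)
  also have "\<dots> \<le> (\<Sum>u\<in>H. \<bar>l u * x u r\<bar>) + \<bar>p r\<bar>" using sum_abs by (rule add_right_mono)
  also have "(\<Sum>u\<in>H. \<bar>l u * x u r\<bar>) \<le> (\<Sum>u\<in>H. \<bar>x u r\<bar>)"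
  proof (rule sum_mono)
    fix u assume u: "u \<in> H"
    have "l u \<le> sum l H" using u l(1) H by (intro member_le_sum) auto
    then show "\<bar>l u * x u r\<bar> \<le> \<bar>x u r\<bar>" using u l(1,2) by (simp add: abs_mult mult_left_le_one_le)
  qed
  finally show ?thesis using \<delta> by (simp add: field_simps)
qed

lemma conv_pts_ray_limit:
  fixes x :: "nat \<Rightarrow> nat \<Rightarrow> real"
  assumes H: "finite H" and hit: "\<And>j. (\<lambda>k. p k + t j * d j k) \<in> conv_pts x H"
    and t: "\<And>j. 0 \<le> t j" "\<And>j. t j \<le> B" and d: "\<And>k. (\<lambda>j. d j k) \<longlonglongrightarrow> d' k"
  shows "\<exists>T\<ge>0. (\<lambda>k. p k + T * d' k) \<in> conv_pts x H"
proof -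
  have "\<forall>j. \<exists>l. (\<forall>u\<in>H. 0 \<le> l u) \<and> sum l H = 1 \<and> (\<forall>k. p k + t j * d j k = (\<Sum>u\<in>H. l u * x u k))"
    using hit unfolding conv_pts_def by (simp add: fun_eq_iff)
  then obtain l where "\<forall>j. (\<forall>u\<in>H. 0 \<le> l j u) \<and> sum (l j) H = 1 \<and>
      (\<forall>k. p k + t j * d j k = (\<Sum>u\<in>H. l j u * x u k))"
    using choice[of "\<lambda>j l. (\<forall>u\<in>H. 0 \<le> l u) \<and> sum l H = 1 \<and> (\<forall>k. p k + t j * d j k = (\<Sum>u\<in>H. l u * x u k))"]
    by blast
  then have l0: "\<And>j u. u \<in> H \<Longrightarrow> 0 \<le> l j u" and l1: "\<And>j. sum (l j) H = 1"
    and eq: "\<And>j k. p k + t j * d j k = (\<Sum>u\<in>H. l j u * x u k)"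
    by blast+
  have lb: "l j u \<le> 1" if "u \<in> H" for j u
    using member_le_sum[of u H "l j"] l0 l1 H that by simp
  have "Bseq t" using t by (intro BseqI'[of _ B]) auto
  moreover have "Bseq (\<lambda>j. l j u)" if "u \<in> H" for u using l0 lb that by (intro BseqI'[of _ 1]) auto
  ultimately have "\<forall>X\<in>insert t ((\<lambda>u j. l j u) ` H). Bseq X" by blast
  moreover have "finite (insert t ((\<lambda>u j. l j u) ` H))" using H by simp
  ultimately obtain r where r: "strict_mono r" "\<forall>X\<in>insert t ((\<lambda>u j. l j u) ` H). convergent (\<lambda>j. X (r j))"
    using bounded_seqs_convergent_subseq by blast
  define T where "T = lim (\<lambda>j. t (r j))"
  define L where "L u = lim (\<lambda>j. l (r j) u)" for u
  have tT: "(\<lambda>j. t (r j)) \<longlonglongrightarrow> T" unfolding T_def using r(2) by (simp add: convergent_LIMSEQ_iff)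
  have lL: "(\<lambda>j. l (r j) u) \<longlonglongrightarrow> L u" if "u \<in> H" for u
    unfolding L_def using r(2) that by (simp add: convergent_LIMSEQ_iff)
  have "0 \<le> T" using tT t by (intro LIMSEQ_le_const) auto
  moreover have "\<forall>u\<in>H. 0 \<le> L u"
    using LIMSEQ_le_const[OF lL] l0 by blast
  moreover have "sum L H = 1"
    using LIMSEQ_unique[OF tendsto_sum[of H "\<lambda>u j. l (r j) u" L, OF lL]] l1 by simp
  moreover have "p k + T * d' k = (\<Sum>u\<in>H. L u * x u k)" for k
  proof -
    have "(\<lambda>j. p k + t (r j) * d (r j) k) \<longlonglongrightarrow> p k + T * d' k"
      using tT LIMSEQ_subseq_LIMSEQ[OF d r(1)] by (intro tendsto_intros) (auto simp: comp_def)
    moreover have "(\<lambda>j. \<Sum>u\<in>H. l (r j) u * x u k) \<longlonglongrightarrow> (\<Sum>u\<in>H. L u * x u k)"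
      using lL by (intro tendsto_intros) auto
    ultimately show ?thesis using eq LIMSEQ_unique by simp
  qed
  ultimately show ?thesis unfolding conv_pts_def by (intro exI[of _ T]) (auto simp: fun_eq_iff)
qed

text \<open>A ray missing a compact simplex still misses it after a small perturbation of its
  direction: otherwise the hitting points would accumulate to a point of the simplex on the ray.\<close>
lemma ray_miss_stable:
  fixes x :: "nat \<Rightarrow> nat \<Rightarrow> real"
  assumes H: "finite H" and r: "d r \<noteq> 0"
    and miss: "\<And>t. 0 \<le> t \<Longrightarrow> (\<lambda>k. p k + t * d k) \<notin> conv_pts x H"
  shows "\<exists>\<epsilon>>0. \<forall>s. 0 < s \<and> s < \<epsilon> \<longrightarrow> (\<forall>t\<ge>0. (\<lambda>k. p k + t * (d k + s * w k)) \<notin> conv_pts x H)"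
proof (rule ccontr)
  define e0 where "e0 = \<bar>d r\<bar> / (2 * (\<bar>w r\<bar> + 1))"
  have e0: "0 < e0" unfolding e0_def using r by (simp add: add_pos_nonneg)
  assume "\<not> ?thesis"
  then have close: "\<exists>s. 0 < s \<and> s < \<epsilon> \<and> (\<exists>t\<ge>0. (\<lambda>k. p k + t * (d k + s * w k)) \<in> conv_pts x H)"
    if "0 < \<epsilon>" for \<epsilon>
    using that by blast
  have "0 < min e0 (1 / (real j + 1))" for j using e0 by simp
  then have "\<forall>j. \<exists>s. 0 < s \<and> s < min e0 (1 / (real j + 1)) \<and>
      (\<exists>t\<ge>0. (\<lambda>k. p k + t * (d k + s * w k)) \<in> conv_pts x H)"
    using close by blast
  then obtain s where s: "\<And>j. 0 < s j" "\<And>j. s j < min e0 (1 / (real j + 1))"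
    and "\<forall>j. \<exists>t\<ge>0. (\<lambda>k. p k + t * (d k + s j * w k)) \<in> conv_pts x H"
    by metis
  then obtain t where t: "\<And>j. 0 \<le> t j" and hit: "\<And>j. (\<lambda>k. p k + t j * (d k + s j * w k)) \<in> conv_pts x H"
    by metis
  have "\<bar>d r\<bar> / 2 \<le> \<bar>d r + s j * w r\<bar>" for j
  proof -
    have "s j * \<bar>w r\<bar> \<le> e0 * (\<bar>w r\<bar> + 1)" using s[of j] by (intro mult_mono) auto
    also have "\<dots> = \<bar>d r\<bar> / 2" unfolding e0_def by (simp add: field_simps)
    finally have "\<bar>s j * w r\<bar> \<le> \<bar>d r\<bar> / 2" using s(1)[of j] by (simp add: abs_mult)
    then show ?thesis by arith
  qed
  then have tB: "t j \<le> ((\<Sum>u\<in>H. \<bar>x u r\<bar>) + \<bar>p r\<bar>) / (\<bar>d r\<bar> / 2)" for j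
    using ray_conv_param_bound[OF H t hit, of "\<bar>d r\<bar> / 2" r] r by simp
  have "(\<lambda>j. s j) \<longlonglongrightarrow> 0"
  proof (rule real_tendsto_sandwich[of "\<lambda>j. 0" _ _ "\<lambda>j. 1 / (real j + 1)"])
    show "(\<lambda>j. 1 / (real j + 1)) \<longlonglongrightarrow> 0"
      using LIMSEQ_inverse_real_of_nat by (simp add: inverse_eq_divide add.commute)
    show "\<forall>\<^sub>F j in sequentially. 0 \<le> s j" using s(1) by (simp add: less_imp_le)
    show "\<forall>\<^sub>F j in sequentially. s j \<le> 1 / (real j + 1)" using s(2) by (simp add: less_imp_le)
  qed simp
  then have "(\<lambda>j. d k + s j * w k) \<longlonglongrightarrow> d k" for k by (auto intro!: tendsto_eq_intros)
  then obtain T where "0 \<le> T" "(\<lambda>k. p k + T * d k) \<in> conv_pts x H"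
    using conv_pts_ray_limit[where t = t and d = "\<lambda>j k. d k + s j * w k" and d' = d, OF H hit t tB]
    by blast
  then show False using miss by blast
qed

lemma perturbed_direction:
  fixes x :: "nat \<Rightarrow> nat \<Rightarrow> real"
  assumes fB: "finite B" and fH: "\<And>H. H \<in> B \<Longrightarrow> finite H"
    and d0: "d0 \<in> vecs n" "d0 r \<noteq> 0"
    and miss: "\<And>H t. H \<in> B \<Longrightarrow> 0 \<le> t \<Longrightarrow> (\<lambda>k. p k + t * d0 k) \<notin> conv_pts x H"
    and fFs: "finite Fs" and Fs: "\<And>f. f \<in> Fs \<Longrightarrow> f \<in> vecs n \<and> f \<noteq> (\<lambda>k. 0) \<and> dotp n f d0 = 0"
  shows "\<exists>d\<in>vecs n. (\<forall>H\<in>B. \<forall>t\<ge>0. (\<lambda>k. p k + t * d k) \<notin> conv_pts x H) \<and> (\<forall>f\<in>Fs. dotp n f d \<noteq> 0)"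
proof -
  obtain w where w: "w \<in> vecs n" "\<forall>f\<in>Fs. dotp n f w \<noteq> 0"
    using exists_vector_off_hyperplanes[OF fFs] Fs by blast
  have "\<forall>H\<in>B. \<exists>\<epsilon>>0. \<forall>s. 0 < s \<and> s < \<epsilon> \<longrightarrow> (\<forall>t\<ge>0. (\<lambda>k. p k + t * (d0 k + s * w k)) \<notin> conv_pts x H)"
    using ray_miss_stable[OF fH d0(2) miss] by blast
  then obtain \<epsilon> where \<epsilon>: "\<And>H. H \<in> B \<Longrightarrow> 0 < \<epsilon> H"
    "\<And>H s t. H \<in> B \<Longrightarrow> 0 < s \<Longrightarrow> s < \<epsilon> H \<Longrightarrow> 0 \<le> t \<Longrightarrow>
       (\<lambda>k. p k + t * (d0 k + s * w k)) \<notin> conv_pts x H"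
    by metis
  define s where "s = Min (insert 1 (\<epsilon> ` B)) / 2"
  have pos: "0 < Min (insert 1 (\<epsilon> ` B))" using fB \<epsilon>(1) by (subst Min_gr_iff) auto
  then have s: "0 < s" unfolding s_def by simp
  have "s < \<epsilon> H" if "H \<in> B" for H
  proof -
    have "Min (insert 1 (\<epsilon> ` B)) \<le> \<epsilon> H" using fB that by (intro Min_le) auto
    then show ?thesis using \<epsilon>(1)[OF that] unfolding s_def by simp
  qed
  then have "\<forall>H\<in>B. \<forall>t\<ge>0. (\<lambda>k. p k + t * (d0 k + s * w k)) \<notin> conv_pts x H" using \<epsilon>(2) s by blast
  moreover have "\<forall>f\<in>Fs. dotp n f (\<lambda>k. d0 k + s * w k) \<noteq> 0"
    using Fs w(2) s by (simp add: dotp_add dotp_smult)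
  moreover have "(\<lambda>k. d0 k + s * w k) \<in> vecs n" using d0(1) w(1) by (auto simp: vecs_def)
  ultimately show ?thesis by (intro bexI[of _ "\<lambda>k. d0 k + s * w k"]) auto
qed

locale star_shaped_realization =
  fixes n m :: nat and K :: "nat set set" and x :: "nat \<Rightarrow> nat \<Rightarrow> real" and p :: "nat \<Rightarrow> real"
  assumes complex: "simplicial_complex_on m K" and dim: "\<And>\<sigma>. \<sigma> \<in> K \<Longrightarrow> card \<sigma> \<le> n"
    and facet: "\<exists>\<sigma>\<in>K. card \<sigma> = n"
    and realization: "geom_realization n K x" and center: "p \<in> vecs n"
    and rays: "\<And>d. d \<in> vecs n \<Longrightarrow> d \<noteq> (\<lambda>k. 0) \<Longrightarrow>
      \<exists>!y. y \<in> polyhedron K x \<and> (\<exists>t\<ge>0. y = (\<lambda>k. p k + t * d k))"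
begin

lemma face_subset: "\<sigma> \<in> K \<Longrightarrow> \<sigma> \<subseteq> {1..m}"
  using complex unfolding simplicial_complex_on_def by blast

lemma face_finite: "\<sigma> \<in> K \<Longrightarrow> finite \<sigma>"
  using face_subset finite_subset by blast

lemma finite_complex: "finite K"
  using complex unfolding simplicial_complex_on_def by (auto intro: finite_subset)

lemma vertex_face: "i \<in> {1..m} \<Longrightarrow> {i} \<in> K"
  using complex unfolding simplicial_complex_on_def by blast

lemma vertex_vecs: "x u \<in> vecs n"
  using realization unfolding geom_realization_def by blast

lemma conv_pts_Int: "\<sigma> \<in> K \<Longrightarrow> \<tau> \<in> K \<Longrightarrow> conv_pts x \<sigma> \<inter> conv_pts x \<tau> = conv_pts x (\<sigma> \<inter> \<tau>)"
  using realization unfolding geom_realization_def by blast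

lemma vertex_mem_polyhedron: "i \<in> {1..m} \<Longrightarrow> x i \<in> polyhedron K x"
  using vertex_face conv_pts_singleton unfolding polyhedron_def by blast

lemma ray_point_unique:
  assumes "d \<in> vecs n" "d \<noteq> (\<lambda>k. 0)" "y \<in> polyhedron K x" "y' \<in> polyhedron K x"
    "0 \<le> s" "y = (\<lambda>k. p k + s * d k)" "0 \<le> t" "y' = (\<lambda>k. p k + t * d k)"
  shows "y = y'"
  using rays[OF assms(1,2)] assms(3-8) by blast

lemma direction_to_vertex:
  assumes "x u \<noteq> p"
  shows "(\<lambda>j. x u j - p j) \<in> vecs n" "(\<lambda>j. x u j - p j) \<noteq> (\<lambda>k. 0)"
  using assms vertex_vecs[of u] center by (auto simp: vecs_def fun_eq_iff)

text \<open>If the center lay on the sphere, the ray from it through any other vertex would meet the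
  sphere twice.\<close>
lemma center_notin_polyhedron:
  assumes "2 \<le> n"
  shows "p \<notin> polyhedron K x"
proof
  assume pP: "p \<in> polyhedron K x"
  obtain \<sigma> where \<sigma>: "\<sigma> \<in> K" "card \<sigma> = n" using facet by blast
  then obtain u v where uv: "u \<in> \<sigma>" "v \<in> \<sigma>" "u \<noteq> v"
    using assms card_le_Suc0_iff_eq[OF face_finite[OF \<sigma>(1)]] by auto
  then have um: "u \<in> {1..m}" "v \<in> {1..m}" using face_subset[OF \<sigma>(1)] by blast+
  have "x u \<noteq> x v"
    using conv_pts_Int[OF vertex_face[OF um(1)] vertex_face[OF um(2)]] uv(3)
    by (simp add: conv_pts_singleton conv_pts_empty)
  then obtain z where z: "z \<in> {1..m}" "x z \<noteq> p" using um by metis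
  have "p = x z"
    using direction_to_vertex[OF z(2)]
    by (rule ray_point_unique[OF _ _ pP vertex_mem_polyhedron[OF z(1)], where s = 0 and t = 1]) auto
  then show False using z(2) by simp
qed

lemma ray_to_vertex_misses:
  assumes n: "2 \<le> n" and k: "k \<in> {1..m}" and H: "H \<in> K" "k \<notin> H" and t: "0 \<le> t"
  shows "(\<lambda>j. p j + t * (x k j - p j)) \<notin> conv_pts x H"
proof
  assume y: "(\<lambda>j. p j + t * (x k j - p j)) \<in> conv_pts x H"
  have xk: "x k \<noteq> p" using center_notin_polyhedron[OF n] vertex_mem_polyhedron[OF k] by auto
  have "(\<lambda>j. p j + t * (x k j - p j)) = x k"
    using direction_to_vertex[OF xk] y H(1) t
    by (intro ray_point_unique[OF _ _ _ vertex_mem_polyhedron[OF k], where s = t and t = 1])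
      (auto simp: polyhedron_def)
  then have "x k \<in> conv_pts x {k} \<inter> conv_pts x H" using y conv_pts_singleton by auto
  then show False using conv_pts_Int[OF vertex_face[OF k] H(1)] H(2) by (simp add: conv_pts_empty)
qed

lemma small_face_hyperplane:
  assumes G: "G \<in> K" "card G < n"
  shows "\<exists>f\<in>vecs n. f \<noteq> (\<lambda>k. 0) \<and> (\<forall>y\<in>conv_pts x G. dotp n f y = dotp n f p)"
proof -
  have "finite ((\<lambda>u j. x u j - p j) ` G)" using face_finite[OF G(1)] by simp
  moreover have "card ((\<lambda>u j. x u j - p j) ` G) < n"
    using card_image_le[OF face_finite[OF G(1)], of "\<lambda>u j. x u j - p j"] G(2) by linarith
  moreover have "(\<lambda>u j. x u j - p j) ` G \<subseteq> vecs n" using vertex_vecs center by (auto simp: vecs_def)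
  ultimately have "\<exists>f\<in>vecs n. f \<noteq> (\<lambda>k. 0) \<and> (\<forall>v\<in>(\<lambda>u j. x u j - p j) ` G. dotp n f v = 0)"
    by (rule exists_annihilator)
  then obtain f where f: "f \<in> vecs n" "f \<noteq> (\<lambda>k. 0)" "\<forall>u\<in>G. dotp n f (\<lambda>j. x u j - p j) = 0"
    by blast
  have "dotp n f y = dotp n f p" if y: "y \<in> conv_pts x G" for y
  proof -
    obtain l where l: "sum l G = 1" "y = (\<lambda>k. \<Sum>u\<in>G. l u * x u k)" using y unfolding conv_pts_def by blast
    have "dotp n f y = (\<Sum>u\<in>G. l u * dotp n f (x u))" unfolding l(2) by (rule dotp_sum)
    also have "\<dots> = (\<Sum>u\<in>G. l u * dotp n f p)"
      by (intro sum.cong refl) (use f(3) in \<open>auto simp: dotp_diff\<close>)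
    finally show ?thesis using l(1) by (simp add: sum_distrib_right[symmetric])
  qed
  then show ?thesis using f by blast
qed

text \<open>If all faces through k are small, they lie in hyperplanes through the center; a direction
  slightly off x k - p then avoids these hyperplanes, and the faces not containing k too.\<close>
lemma direction_missing_sphere:
  assumes n: "2 \<le> n" and k: "k \<in> {1..m}" and small: "\<And>G. G \<in> K \<Longrightarrow> k \<in> G \<Longrightarrow> card G < n"
  shows "\<exists>d\<in>vecs n. d \<noteq> (\<lambda>k. 0) \<and> (\<forall>G\<in>K. \<forall>t\<ge>0. (\<lambda>j. p j + t * d j) \<in> conv_pts x G \<longrightarrow> t = 0)"
proof -
  define A where "A = {G \<in> K. k \<in> G}"
  have "\<exists>f\<in>vecs n. f \<noteq> (\<lambda>k. 0) \<and> (\<forall>y\<in>conv_pts x G. dotp n f y = dotp n f p)" if "G \<in> A" for G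
    using small_face_hyperplane small that unfolding A_def by blast
  then obtain fG where fG: "\<And>G. G \<in> A \<Longrightarrow> fG G \<in> vecs n \<and> fG G \<noteq> (\<lambda>k. 0) \<and>
      (\<forall>y\<in>conv_pts x G. dotp n (fG G) y = dotp n (fG G) p)"
    by metis
  define d0 where "d0 = (\<lambda>j. x k j - p j)"
  have "x k \<noteq> p" using center_notin_polyhedron[OF n] vertex_mem_polyhedron[OF k] by auto
  then have d0: "d0 \<in> vecs n" "d0 \<noteq> (\<lambda>k. 0)" unfolding d0_def using direction_to_vertex by auto
  then obtain r where r: "d0 r \<noteq> 0" by auto
  have fGd0: "dotp n (fG G) d0 = 0" if G: "G \<in> A" for G
    using fG[OF G] conv_pts_vertex[OF face_finite, of G k x] G unfolding A_def d0_def by (simp add: dotp_diff)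
  have "\<exists>d\<in>vecs n. (\<forall>H\<in>{H \<in> K. k \<notin> H}. \<forall>t\<ge>0. (\<lambda>j. p j + t * d j) \<notin> conv_pts x H) \<and>
      (\<forall>f\<in>fG ` A. dotp n f d \<noteq> 0)"
  proof (rule perturbed_direction[OF _ _ d0(1) r])
    show "finite {H \<in> K. k \<notin> H}" "finite (fG ` A)" using finite_complex unfolding A_def by simp_all
    show "\<And>H. H \<in> {H \<in> K. k \<notin> H} \<Longrightarrow> finite H" using face_finite by blast
    show "\<And>H t. H \<in> {H \<in> K. k \<notin> H} \<Longrightarrow> 0 \<le> t \<Longrightarrow> (\<lambda>j. p j + t * d0 j) \<notin> conv_pts x H"
      using ray_to_vertex_misses[OF n k] unfolding d0_def by blast
    fix f assume "f \<in> fG ` A"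
    then obtain G where "G \<in> A" "f = fG G" by blast
    then show "f \<in> vecs n \<and> f \<noteq> (\<lambda>k. 0) \<and> dotp n f d0 = 0" using fG fGd0 by simp
  qed
  then obtain d where d: "d \<in> vecs n" "\<forall>H\<in>{H \<in> K. k \<notin> H}. \<forall>t\<ge>0. (\<lambda>j. p j + t * d j) \<notin> conv_pts x H"
    "\<forall>f\<in>fG ` A. dotp n f d \<noteq> 0"
    by blast
  have "{k} \<in> A" unfolding A_def using vertex_face[OF k] by simp
  then have "d \<noteq> (\<lambda>k. 0)" using d(3) by auto
  moreover have "t = 0" if G: "G \<in> K" and t: "0 \<le> t" and y: "(\<lambda>j. p j + t * d j) \<in> conv_pts x G" for G t
  proof (cases "k \<in> G")
    case True
    then have GA: "G \<in> A" unfolding A_def using G by simp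
    have "dotp n (fG G) (\<lambda>j. p j + t * d j) = dotp n (fG G) p + t * dotp n (fG G) d"
      by (simp add: dotp_add dotp_smult)
    then show "t = 0" using fG[OF GA] y d(3) GA by auto
  next
    case False
    then show "t = 0" using d(2) G t y by blast
  qed
  ultimately show ?thesis using d(1) by blast
qed

lemma vertex_in_facet:
  assumes k: "k \<in> {1..m}"
  shows "\<exists>F\<in>K. card F = n \<and> k \<in> F"
proof (rule ccontr)
  assume neg: "\<not> ?thesis"
  have n: "2 \<le> n"
  proof (rule ccontr)
    assume "\<not> 2 \<le> n"
    then have "card {k} = n" using dim[OF vertex_face[OF k]] by simp
    then show False using neg vertex_face[OF k] by blast
  qed
  have "card G < n" if "G \<in> K" "k \<in> G" for G using neg dim[of G] that by fastforce
  then obtain d where d: "d \<in> vecs n" "d \<noteq> (\<lambda>k. 0)"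
    "\<forall>G\<in>K. \<forall>t\<ge>0. (\<lambda>j. p j + t * d j) \<in> conv_pts x G \<longrightarrow> t = 0"
    using direction_missing_sphere[OF n k] by blast
  then obtain y t where y: "y \<in> polyhedron K x" "0 \<le> t" "y = (\<lambda>j. p j + t * d j)" using rays by blast
  then have "t = 0" using d(3) unfolding polyhedron_def by blast
  then show False using y center_notin_polyhedron[OF n] by simp
qed

end

lemma star_shaped_sphere_pure:
  assumes K: "star_shaped_sphere n m K" and k: "k \<in> {1..m}"
  shows "\<exists>F\<in>K. card F = n \<and> k \<in> F"
proof -
  have "\<exists>x p. geom_realization n K x \<and> p \<in> vecs n \<and>
        (\<forall>d\<in>vecs n. d \<noteq> (\<lambda>k. 0) \<longrightarrow>
           (\<exists>!y. y \<in> polyhedron K x \<and> (\<exists>t::real. 0 \<le> t \<and> y = (\<lambda>k. p k + t * d k))))"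
    using K unfolding star_shaped_sphere_def by (elim conjE) assumption
  then obtain x p where "geom_realization n K x" "p \<in> vecs n"
    "\<forall>d\<in>vecs n. d \<noteq> (\<lambda>k. 0) \<longrightarrow> (\<exists>!y. y \<in> polyhedron K x \<and> (\<exists>t\<ge>0. y = (\<lambda>k. p k + t * d k)))"
    by blast
  moreover have "simplicial_complex_on m K"
    using K unfolding star_shaped_sphere_def by (elim conjE) assumption
  moreover have "\<forall>\<sigma>\<in>K. card \<sigma> \<le> n"
    using K unfolding star_shaped_sphere_def by (elim conjE) assumption
  moreover have "\<exists>\<sigma>\<in>K. card \<sigma> = n"
    using K unfolding star_shaped_sphere_def by (elim conjE) assumption
  ultimately interpret star_shaped_realization n m K x p
    by unfold_locales blast+
  show ?thesis using vertex_in_facet[OF k] .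
qed

section \<open>Linear algebra on coordinate vectors\<close>

definition linmap :: "nat \<Rightarrow> nat \<Rightarrow> ((nat \<Rightarrow> 'r::comm_ring_1) \<Rightarrow> (nat \<Rightarrow> 'r)) \<Rightarrow> bool" where
  "linmap N N' f \<longleftrightarrow> (\<forall>x\<in>vecs N. f x \<in> vecs N') \<and>
     (\<forall>x\<in>vecs N. \<forall>y\<in>vecs N. f (\<lambda>k. x k + y k) = (\<lambda>k. f x k + f y k)) \<and>
     (\<forall>c. \<forall>x\<in>vecs N. f (\<lambda>k. c * x k) = (\<lambda>k. c * f x k))"

definition linfun :: "nat \<Rightarrow> ((nat \<Rightarrow> 'r::comm_ring_1) \<Rightarrow> 'r) \<Rightarrow> bool" where
  "linfun N \<psi> \<longleftrightarrow> (\<forall>x\<in>vecs N. \<forall>y\<in>vecs N. \<psi> (\<lambda>k. x k + y k) = \<psi> x + \<psi> y) \<and>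
     (\<forall>c. \<forall>x\<in>vecs N. \<psi> (\<lambda>k. c * x k) = c * \<psi> x)"

definition unit_vec :: "nat \<Rightarrow> nat \<Rightarrow> 'r::comm_ring_1" where
  "unit_vec j = (\<lambda>k. if k = j then 1 else 0)"

lemma vecs_zero [simp]: "(\<lambda>k. 0::'r::zero) \<in> vecs N"
  by (auto simp: vecs_def)

lemma vecs_add [intro]:
  fixes x y :: "nat \<Rightarrow> 'r::comm_ring_1"
  shows "x \<in> vecs N \<Longrightarrow> y \<in> vecs N \<Longrightarrow> (\<lambda>k. x k + y k) \<in> vecs N"
  by (auto simp: vecs_def)

lemma vecs_diff [intro]:
  fixes x y :: "nat \<Rightarrow> 'r::comm_ring_1"
  shows "x \<in> vecs N \<Longrightarrow> y \<in> vecs N \<Longrightarrow> (\<lambda>k. x k - y k) \<in> vecs N"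
  by (auto simp: vecs_def)

lemma vecs_smult [intro]:
  fixes x :: "nat \<Rightarrow> 'r::comm_ring_1"
  shows "x \<in> vecs N \<Longrightarrow> (\<lambda>k. c * x k) \<in> vecs N"
  by (auto simp: vecs_def)

lemma vecs_sum [intro]:
  fixes v :: "_ \<Rightarrow> nat \<Rightarrow> 'r::comm_ring_1"
  shows "(\<And>u. u \<in> S \<Longrightarrow> v u \<in> vecs N) \<Longrightarrow> (\<lambda>k. \<Sum>u\<in>S. c u * v u k) \<in> vecs N"
  by (auto simp: vecs_def intro!: sum.neutral)

lemma vecs_unit_vec [intro]: "j < N \<Longrightarrow> unit_vec j \<in> vecs N"
  by (auto simp: vecs_def unit_vec_def)

lemma vecs_eq_unit_vec_sum:
  fixes x :: "nat \<Rightarrow> 'r::comm_ring_1"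
  assumes "x \<in> vecs N"
  shows "x = (\<lambda>k. \<Sum>j<N. x j * unit_vec j k)"
proof
  fix k show "x k = (\<Sum>j<N. x j * unit_vec j k)"
    using assms by (cases "k < N") (auto simp: unit_vec_def vecs_def if_distrib cong: if_cong)
qed

lemma lincomb_vecs [intro]: "(\<And>u. u \<in> S \<Longrightarrow> lam u \<in> vecs N) \<Longrightarrow> lincomb lam S c \<in> vecs N"
  unfolding lincomb_def by (rule vecs_sum)

lemma mv_vecs [intro]: "mv M N U x \<in> vecs M"
  unfolding mv_def vecs_def by auto

lemma linmap_mv: "linmap N N' (mv N' N M)"
  unfolding linmap_def
  by (auto simp: mv_vecs) (auto simp: mv_def fun_eq_iff distrib_left sum.distrib sum_distrib_left ac_simps)

lemma linmap_vecs: "linmap N N' f \<Longrightarrow> x \<in> vecs N \<Longrightarrow> f x \<in> vecs N'"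
  by (auto simp: linmap_def)

lemma linmap_add:
  "linmap N N' f \<Longrightarrow> x \<in> vecs N \<Longrightarrow> y \<in> vecs N \<Longrightarrow> f (\<lambda>k. x k + y k) = (\<lambda>k. f x k + f y k)"
  by (auto simp: linmap_def)

lemma linmap_smult: "linmap N N' f \<Longrightarrow> x \<in> vecs N \<Longrightarrow> f (\<lambda>k. c * x k) = (\<lambda>k. c * f x k)"
  by (auto simp: linmap_def)

lemma linmap_zero: "linmap N N' f \<Longrightarrow> f (\<lambda>k. 0) = (\<lambda>k. 0)"
  using linmap_smult[of N N' f "\<lambda>k. 0" 0] by simp

lemma linmap_diff:
  assumes f: "linmap N N' f" and x: "x \<in> vecs N" and y: "y \<in> vecs N"
  shows "f (\<lambda>k. x k - y k) = (\<lambda>k. f x k - f y k)"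
proof -
  have "(\<lambda>k. x k - y k) = (\<lambda>k. x k + (-1) * y k)" by simp
  then show ?thesis using linmap_add[OF f x vecs_smult[OF y, of "-1"]] linmap_smult[OF f y, of "-1"]
    by simp
qed

lemma linmap_sum:
  assumes f: "linmap N N' f" and fin: "finite S" and v: "\<And>u. u \<in> S \<Longrightarrow> v u \<in> vecs N"
  shows "f (\<lambda>k. \<Sum>u\<in>S. c u * v u k) = (\<lambda>k. \<Sum>u\<in>S. c u * f (v u) k)"
  using fin v
proof (induction S rule: finite_induct)
  case empty
  then show ?case using linmap_zero[OF f] by simp
next
  case (insert x F)
  have "f (\<lambda>k. \<Sum>u\<in>insert x F. c u * v u k) = f (\<lambda>k. c x * v x k + (\<Sum>u\<in>F. c u * v u k))"
    using insert by simp
  also have "\<dots> = (\<lambda>k. f (\<lambda>k. c x * v x k) k + f (\<lambda>k. \<Sum>u\<in>F. c u * v u k) k)"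
    using insert by (intro linmap_add[OF f]) auto
  also have "\<dots> = (\<lambda>k. \<Sum>u\<in>insert x F. c u * f (v u) k)"
    using insert linmap_smult[OF f, of "v x" "c x"] by auto
  finally show ?case .
qed

lemma linmap_lincomb:
  assumes "linmap N N' f" "finite S" "\<And>u. u \<in> S \<Longrightarrow> lam u \<in> vecs N"
  shows "f (lincomb lam S c) = lincomb (\<lambda>u. f (lam u)) S c"
  unfolding lincomb_def using linmap_sum[OF assms] by simp

lemma linmap_comp: "linmap N N' f \<Longrightarrow> linmap N' N'' g \<Longrightarrow> linmap N N'' (\<lambda>x. g (f x))"
  unfolding linmap_def by auto

lemma linmap_minus: "linmap N N' f \<Longrightarrow> linmap N N' g \<Longrightarrow> linmap N N' (\<lambda>x r. f x r - g x r)"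
  unfolding linmap_def by (auto simp: fun_eq_iff algebra_simps)

lemma linmap_eq_mv:
  assumes f: "linmap N N' f"
  shows "\<exists>M. \<forall>x\<in>vecs N. mv N' N M x = f x"
proof -
  have "mv N' N (\<lambda>i j. f (unit_vec j) i) x = f x" if x: "x \<in> vecs N" for x
  proof -
    have "f x = f (\<lambda>k. \<Sum>j\<in>{..<N}. x j * unit_vec j k)" using vecs_eq_unit_vec_sum[OF x] by simp
    also have "\<dots> = (\<lambda>k. \<Sum>j<N. x j * f (unit_vec j) k)"
      by (rule linmap_sum[OF f]) auto
    finally have fx: "f x = (\<lambda>k. \<Sum>j<N. x j * f (unit_vec j) k)" .
    show ?thesis
    proof
      fix i show "mv N' N (\<lambda>i j. f (unit_vec j) i) x i = f x i"
        using linmap_vecs[OF f x] by (cases "i < N'") (simp_all add: mv_def fx mult.commute vecs_def)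
    qed
  qed
  then show ?thesis by blast
qed

lemma linmap_right_inverse:
  fixes f :: "(nat \<Rightarrow> 'r::comm_ring_1) \<Rightarrow> (nat \<Rightarrow> 'r)"
  assumes f: "linmap N N' f" and surj: "\<forall>y\<in>vecs N'. \<exists>x\<in>vecs N. f x = y"
  shows "\<exists>s. linmap N' N s \<and> (\<forall>y\<in>vecs N'. f (s y) = y)"
proof -
  have "\<forall>j. \<exists>x. j < N' \<longrightarrow> x \<in> vecs N \<and> f x = unit_vec j"
    using surj vecs_unit_vec by blast
  then obtain pre where pre: "\<And>j. j < N' \<Longrightarrow> pre j \<in> vecs N \<and> f (pre j) = unit_vec j"
    by metis
  define s where "s y = (\<lambda>k. \<Sum>j\<in>{..<N'}. y j * pre j k)" for y
  have "linmap N' N s"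
    unfolding linmap_def
  proof (intro conjI ballI allI)
    fix y :: "nat \<Rightarrow> 'r" show "s y \<in> vecs N" unfolding s_def using pre by auto
  next
    fix x y :: "nat \<Rightarrow> 'r" show "s (\<lambda>k. x k + y k) = (\<lambda>k. s x k + s y k)"
      unfolding s_def by (auto simp: distrib_right sum.distrib)
  next
    fix c :: 'r and x :: "nat \<Rightarrow> 'r" show "s (\<lambda>k. c * x k) = (\<lambda>k. c * s x k)"
      unfolding s_def by (auto simp: sum_distrib_left ac_simps)
  qed
  moreover have "f (s y) = y" if y: "y \<in> vecs N'" for y
  proof -
    have "f (s y) = (\<lambda>k. \<Sum>j\<in>{..<N'}. y j * f (pre j) k)"
      unfolding s_def by (rule linmap_sum[OF f]) (use pre in auto)
    also have "\<dots> = y" using pre vecs_eq_unit_vec_sum[OF y] by auto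
    finally show ?thesis .
  qed
  ultimately show ?thesis by blast
qed

lemma linfun_coordinate: "linmap N N' f \<Longrightarrow> linfun N (\<lambda>x. f x j)"
  unfolding linmap_def linfun_def by auto

lemma linfun_lincomb:
  assumes \<psi>: "linfun N \<psi>" and fin: "finite S" and v: "\<And>u. u \<in> S \<Longrightarrow> lam u \<in> vecs N"
  shows "\<psi> (lincomb lam S c) = (\<Sum>u\<in>S. c u * \<psi> (lam u))"
proof -
  have "linmap N 1 (\<lambda>x. (\<lambda>k. if k = 0 then \<psi> x else 0))"
    using \<psi> unfolding linmap_def linfun_def vecs_def by (auto simp: fun_eq_iff)
  from fun_cong[OF linmap_sum[where v = lam and c = c, OF this fin v], of 0] show ?thesis
    unfolding lincomb_def by simp
qed

lemma linfun_add: "linfun N \<psi> \<Longrightarrow> x \<in> vecs N \<Longrightarrow> y \<in> vecs N \<Longrightarrow> \<psi> (\<lambda>k. x k + y k) = \<psi> x + \<psi> y"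
  by (simp add: linfun_def)

lemma lincomb_cong: "(\<And>u. u \<in> S \<Longrightarrow> c u = c' u) \<Longrightarrow> lincomb lam S c = lincomb lam S c'"
  unfolding lincomb_def by (auto intro!: sum.cong)

lemma lincomb_cong_vectors: "(\<And>u. u \<in> S \<Longrightarrow> lam u = lam' u) \<Longrightarrow> lincomb lam S c = lincomb lam' S c"
  unfolding lincomb_def by (auto intro!: sum.cong)

lemma lincomb_add: "lincomb lam S (\<lambda>u. c u + d u) = (\<lambda>k. lincomb lam S c k + lincomb lam S d k)"
  unfolding lincomb_def by (auto simp: distrib_right sum.distrib)

lemma lincomb_diff: "lincomb lam S (\<lambda>u. c u - d u) = (\<lambda>k. lincomb lam S c k - lincomb lam S d k)"
  unfolding lincomb_def by (auto simp: left_diff_distrib sum_subtractf)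

lemma lincomb_smult: "lincomb lam S (\<lambda>u. a * c u) = (\<lambda>k. a * lincomb lam S c k)"
  unfolding lincomb_def by (auto simp: sum_distrib_left ac_simps)

lemma lincomb_zero: "lincomb lam S (\<lambda>u. 0) = (\<lambda>k. 0)"
  unfolding lincomb_def by auto

lemma lincomb_union:
  "finite S \<Longrightarrow> finite B \<Longrightarrow> S \<inter> B = {} \<Longrightarrow>
    lincomb lam (S \<union> B) c = (\<lambda>k. lincomb lam S c k + lincomb lam B c k)"
  unfolding lincomb_def by (auto simp: sum.union_disjoint)

lemma lincomb_indicator:
  assumes "finite S" "u \<in> S"
  shows "lincomb lam S (\<lambda>v. if v = u then 1 else 0) = lam u"
proof
  fix k
  have "(if v = u then 1 else 0) * lam v k = (if v = u then lam v k else 0)" for v by simp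
  then show "lincomb lam S (\<lambda>v. if v = u then 1 else 0) k = lam u k"
    unfolding lincomb_def using assms by simp
qed

lemma lincomb_reindex:
  "inj_on g S \<Longrightarrow> lincomb lam (g ` S) c = lincomb (\<lambda>u. lam (g u)) S (\<lambda>u. c (g u))"
  unfolding lincomb_def by (auto simp: sum.reindex)

lemma rspanI: "lincomb lam S c = x \<Longrightarrow> x \<in> rspan lam S"
  unfolding rspan_def by auto

lemma rspanE: "x \<in> rspan lam S \<Longrightarrow> (\<And>c. x = lincomb lam S c \<Longrightarrow> P) \<Longrightarrow> P"
  unfolding rspan_def by auto

lemma rspan_vecs: "(\<And>u. u \<in> S \<Longrightarrow> lam u \<in> vecs N) \<Longrightarrow> rspan lam S \<subseteq> vecs N"
  unfolding rspan_def by auto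

lemma rspan_generator: "finite S \<Longrightarrow> u \<in> S \<Longrightarrow> lam u \<in> rspan lam S"
  by (rule rspanI, rule lincomb_indicator)

lemma rspan_singleton: "x \<in> rspan lam {u} \<longleftrightarrow> (\<exists>c. x = (\<lambda>k. c * lam u k))"
  unfolding rspan_def lincomb_def by auto

lemma rspan_mono:
  fixes lam :: "'v \<Rightarrow> nat \<Rightarrow> 'r::comm_ring_1"
  assumes "finite S'" "S \<subseteq> S'"
  shows "rspan lam S \<subseteq> rspan lam S'"
proof
  fix x assume "x \<in> rspan lam S"
  then obtain c where x: "x = lincomb lam S c" by (rule rspanE)
  have e: "(if u \<in> S then c u else 0) * z = (if u \<in> S then c u * z else 0)" for u and z :: 'r
    by simp
  have "lincomb lam S' (\<lambda>u. if u \<in> S then c u else 0) = lincomb lam S c"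
  proof
    fix k show "lincomb lam S' (\<lambda>u. if u \<in> S then c u else 0) k = lincomb lam S c k"
      unfolding lincomb_def e using sum.inter_restrict[OF assms(1), of "\<lambda>u. c u * lam u k" S] assms(2)
      by (simp add: Int_absorb1)
  qed
  then show "x \<in> rspan lam S'" using x by (intro rspanI) simp
qed

lemma rspan_union:
  assumes "finite A" "finite B" "A \<inter> B = {}"
  shows "x \<in> rspan lam (A \<union> B) \<longleftrightarrow> (\<exists>y\<in>rspan lam A. \<exists>z\<in>rspan lam B. x = (\<lambda>k. y k + z k))"
proof
  assume "x \<in> rspan lam (A \<union> B)"
  then show "\<exists>y\<in>rspan lam A. \<exists>z\<in>rspan lam B. x = (\<lambda>k. y k + z k)"
    using lincomb_union[OF assms] unfolding rspan_def by blast
next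
  assume "\<exists>y\<in>rspan lam A. \<exists>z\<in>rspan lam B. x = (\<lambda>k. y k + z k)"
  then obtain c d where x: "x = (\<lambda>k. lincomb lam A c k + lincomb lam B d k)" unfolding rspan_def by auto
  define e where "e u = (if u \<in> A then c u else d u)" for u
  have "lincomb lam (A \<union> B) e = (\<lambda>k. lincomb lam A e k + lincomb lam B e k)"
    by (rule lincomb_union[OF assms])
  also have "lincomb lam A e = lincomb lam A c" by (rule lincomb_cong) (auto simp: e_def)
  also have "lincomb lam B e = lincomb lam B d" by (rule lincomb_cong) (use assms(3) in \<open>auto simp: e_def\<close>)
  finally show "x \<in> rspan lam (A \<union> B)" using x by (intro rspanI) simp
qed

lemma is_basis_vecs:
  assumes "is_basis N lam S" "finite S" "u \<in> S"
  shows "lam u \<in> vecs N"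
proof -
  have "lincomb lam S (\<lambda>v. if v = u then 1 else 0) \<in> vecs N"
    using assms(1,3) unfolding is_basis_def bij_betw_def by auto
  then show ?thesis using lincomb_indicator[OF assms(2,3), of lam] by simp
qed

lemma is_basis_coords:
  assumes "is_basis N lam S" "x \<in> vecs N"
  shows "\<exists>c. (\<forall>u. u \<notin> S \<longrightarrow> c u = 0) \<and> lincomb lam S c = x"
proof -
  have "x \<in> lincomb lam S ` {c. \<forall>u. u \<notin> S \<longrightarrow> c u = 0}"
    using assms unfolding is_basis_def bij_betw_def by simp
  then show ?thesis by blast
qed

lemma is_basis_coords_unique:
  assumes "is_basis N lam S" "\<forall>u. u \<notin> S \<longrightarrow> c u = 0" "\<forall>u. u \<notin> S \<longrightarrow> c' u = 0"
    "lincomb lam S c = lincomb lam S c'"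
  shows "c = c'"
proof -
  have "inj_on (lincomb lam S) {c. \<forall>u. u \<notin> S \<longrightarrow> c u = 0}"
    using assms(1) unfolding is_basis_def bij_betw_def by simp
  then show ?thesis using inj_onD[of "lincomb lam S" _ c c'] assms(2-4) by auto
qed

lemma is_basis_independent:
  assumes B: "is_basis N lam S" and c: "lincomb lam S c = (\<lambda>k. 0)" and u: "u \<in> S"
  shows "c u = 0"
proof -
  have "lincomb lam S (\<lambda>v. if v \<in> S then c v else 0) = lincomb lam S (\<lambda>v. 0)"
    using c lincomb_zero[of lam S] lincomb_cong[of S "\<lambda>v. if v \<in> S then c v else 0" c lam] by simp
  then have "(\<lambda>v. if v \<in> S then c v else 0) = (\<lambda>v. 0)"
    by (intro is_basis_coords_unique[OF B]) auto
  then have "(if u \<in> S then c u else 0) = 0" by (rule fun_cong)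
  then show ?thesis using u by simp
qed

lemma is_basis_cong:
  assumes "is_basis N lam S" "\<And>u. u \<in> S \<Longrightarrow> lam u = lam' u"
  shows "is_basis N lam' S"
proof -
  have "lincomb lam S = lincomb lam' S"
    using lincomb_cong_vectors[of S lam lam'] assms(2) by (auto simp: fun_eq_iff)
  then show ?thesis using assms(1) unfolding is_basis_def by simp
qed

lemma is_basis_extend_linmap:
  fixes lam g :: "'v \<Rightarrow> nat \<Rightarrow> 'r::comm_ring_1"
  assumes B: "is_basis N lam S" and fin: "finite S" and g: "\<And>u. u \<in> S \<Longrightarrow> g u \<in> vecs N'"
  shows "\<exists>f. linmap N N' f \<and> (\<forall>u\<in>S. f (lam u) = g u)"
proof -
  obtain co where co: "\<And>x. x \<in> vecs N \<Longrightarrow> (\<forall>u. u \<notin> S \<longrightarrow> co x u = 0) \<and> lincomb lam S (co x) = x"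
    using is_basis_coords[OF B] by metis
  have co_eq: "co x = c" if "x \<in> vecs N" "\<forall>u. u \<notin> S \<longrightarrow> c u = 0" "lincomb lam S c = x" for x c
    using is_basis_coords_unique[OF B _ that(2)] co[OF that(1)] that(3) by auto
  define f where "f x = (\<lambda>k. \<Sum>u\<in>S. co x u * g u k)" for x
  have "linmap N N' f"
    unfolding linmap_def
  proof (intro conjI ballI allI)
    fix x :: "nat \<Rightarrow> 'r" assume "x \<in> vecs N" then show "f x \<in> vecs N'" unfolding f_def using g by auto
  next
    fix x y :: "nat \<Rightarrow> 'r" assume x: "x \<in> vecs N" and y: "y \<in> vecs N"
    have "co (\<lambda>k. x k + y k) = (\<lambda>u. co x u + co y u)"
      by (rule co_eq) (use co[OF x] co[OF y] x y in \<open>auto simp: lincomb_add\<close>)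
    then show "f (\<lambda>k. x k + y k) = (\<lambda>k. f x k + f y k)"
      unfolding f_def by (auto simp: distrib_right sum.distrib)
  next
    fix c :: 'r and x :: "nat \<Rightarrow> 'r" assume x: "x \<in> vecs N"
    have "co (\<lambda>k. c * x k) = (\<lambda>u. c * co x u)"
      by (rule co_eq) (use co[OF x] x in \<open>auto simp: lincomb_smult\<close>)
    then show "f (\<lambda>k. c * x k) = (\<lambda>k. c * f x k)"
      unfolding f_def by (auto simp: sum_distrib_left ac_simps)
  qed
  moreover have "f (lam u) = g u" if u: "u \<in> S" for u
  proof -
    have "co (lam u) = (\<lambda>v. if v = u then 1 else 0)"
      by (rule co_eq) (use is_basis_vecs[OF B fin u] u lincomb_indicator[OF fin u] in auto)
    moreover have "(if v = u then 1 else 0) * g v k = (if v = u then g v k else 0)" for v k by simp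
    ultimately show ?thesis unfolding f_def using fin u by simp
  qed
  ultimately show ?thesis by blast
qed

lemma is_basis_reindex:
  fixes lam :: "'v \<Rightarrow> nat \<Rightarrow> 'r::comm_ring_1" and g :: "'u \<Rightarrow> 'v"
  assumes g: "inj_on g S" and B: "is_basis N lam (g ` S)"
  shows "is_basis N (\<lambda>u. lam (g u)) S"
proof -
  define T where "T c v = (if v \<in> g ` S then c (inv_into S g v) else 0)" for c :: "'u \<Rightarrow> 'r" and v
  have T: "bij_betw T {c. \<forall>u. u \<notin> S \<longrightarrow> c u = 0} {c. \<forall>v. v \<notin> g ` S \<longrightarrow> c v = 0}"
  proof (rule bij_betw_byWitness[where f' = "\<lambda>c u. if u \<in> S then c (g u) else 0"])
  qed (use g in \<open>auto simp: T_def fun_eq_iff\<close>)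
  have "lincomb lam (g ` S) (T c) = lincomb (\<lambda>u. lam (g u)) S c" for c
    unfolding lincomb_reindex[OF g] by (rule lincomb_cong) (use g in \<open>auto simp: T_def\<close>)
  then show ?thesis
    using bij_betw_trans[OF T B[unfolded is_basis_def]] unfolding is_basis_def comp_def by simp
qed

lemma rspan_reindex:
  fixes lam :: "'v \<Rightarrow> nat \<Rightarrow> 'r::comm_ring_1"
  assumes g: "inj_on g S"
  shows "rspan lam (g ` S) = rspan (\<lambda>u. lam (g u)) S"
proof (intro equalityI subsetI)
  fix x assume "x \<in> rspan lam (g ` S)"
  then show "x \<in> rspan (\<lambda>u. lam (g u)) S" unfolding rspan_def using lincomb_reindex[OF g] by auto
next
  fix x assume "x \<in> rspan (\<lambda>u. lam (g u)) S"
  then obtain c where c: "x = lincomb (\<lambda>u. lam (g u)) S c" by (rule rspanE)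
  have "lincomb (\<lambda>u. lam (g u)) S c = lincomb (\<lambda>u. lam (g u)) S (\<lambda>u. c (inv_into S g (g u)))"
    by (rule lincomb_cong) (use g in auto)
  also have "\<dots> = lincomb lam (g ` S) (\<lambda>v. c (inv_into S g v))"
    using lincomb_reindex[OF g, of lam "\<lambda>v. c (inv_into S g v)"] by simp
  finally show "x \<in> rspan lam (g ` S)" using c by (intro rspanI) simp
qed

lemma rspan_linmap_image:
  assumes f: "linmap N N' f" and fin: "finite S" and v: "\<And>u. u \<in> S \<Longrightarrow> lam u \<in> vecs N"
  shows "rspan (\<lambda>u. f (lam u)) S = f ` rspan lam S"
proof -
  have "lincomb (\<lambda>u. f (lam u)) S c = f (lincomb lam S c)" for c
    using linmap_lincomb[OF f fin v] by simp
  then show ?thesis unfolding rspan_def by auto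
qed

section \<open>Quotient maps and projections\<close>

text \<open>The linear surjection f identifies R^N / <lam u : u \<in> S> with R^n, as in projK.\<close>
definition quotient_map :: "nat \<Rightarrow> nat \<Rightarrow> ('v \<Rightarrow> nat \<Rightarrow> 'r::comm_ring_1) \<Rightarrow> 'v set
    \<Rightarrow> ((nat \<Rightarrow> 'r) \<Rightarrow> (nat \<Rightarrow> 'r)) \<Rightarrow> bool" where
  "quotient_map N n lam S f \<longleftrightarrow> linmap N n f \<and> (\<forall>y\<in>vecs n. \<exists>x\<in>vecs N. f x = y) \<and>
     rspan lam S \<subseteq> vecs N \<and> (\<forall>x\<in>vecs N. f x = (\<lambda>k. 0) \<longleftrightarrow> x \<in> rspan lam S)"

lemma quotient_map_linmap: "quotient_map N n lam S f \<Longrightarrow> linmap N n f"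
  unfolding quotient_map_def by blast

lemma quotient_map_surj: "quotient_map N n lam S f \<Longrightarrow> y \<in> vecs n \<Longrightarrow> \<exists>x\<in>vecs N. f x = y"
  unfolding quotient_map_def by blast

lemma quotient_map_kernel:
  "quotient_map N n lam S f \<Longrightarrow> x \<in> vecs N \<Longrightarrow> f x = (\<lambda>k. 0) \<longleftrightarrow> x \<in> rspan lam S"
  unfolding quotient_map_def by blast

lemma quotient_map_vecs: "quotient_map N n lam S f \<Longrightarrow> x \<in> vecs N \<Longrightarrow> f x \<in> vecs n"
  unfolding quotient_map_def using linmap_vecs by blast

lemma quotient_map_generator:
  "quotient_map N n lam S f \<Longrightarrow> finite S \<Longrightarrow> u \<in> S \<Longrightarrow> lam u \<in> vecs N \<Longrightarrow> f (lam u) = (\<lambda>k. 0)"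
  using quotient_map_kernel[of N n lam S f "lam u"] rspan_generator[of S u lam] by simp

lemma quotient_map_rspan_cong:
  "rspan lam S = rspan lam' S' \<Longrightarrow> quotient_map N n lam S f \<longleftrightarrow> quotient_map N n lam' S' f"
  unfolding quotient_map_def by simp

lemma is_basis_independent_mod:
  assumes B: "is_basis N lam (S \<union> B)" and disj: "S \<inter> B = {}" and fS: "finite S" and fB: "finite B"
    and c: "lincomb lam B c \<in> rspan lam S" and u: "u \<in> B"
  shows "c u = 0"
proof -
  obtain d where d: "lincomb lam B c = lincomb lam S d" using c by (rule rspanE)
  define e where "e u = (if u \<in> B then c u else if u \<in> S then - d u else 0)" for u
  have "lincomb lam (S \<union> B) e = (\<lambda>k. lincomb lam S e k + lincomb lam B e k)"
    by (rule lincomb_union[OF fS fB disj])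
  also have "lincomb lam S e = lincomb lam S (\<lambda>u. - d u)"
    by (rule lincomb_cong) (use disj in \<open>auto simp: e_def\<close>)
  also have "lincomb lam B e = lincomb lam B c"
    by (rule lincomb_cong) (auto simp: e_def)
  finally have "lincomb lam (S \<union> B) e = (\<lambda>k. 0)"
    using d lincomb_smult[of lam S "-1" d] by (auto simp: fun_eq_iff)
  then show ?thesis using is_basis_independent[OF B, of e u] u by (simp add: e_def)
qed

lemma is_basis_quotient:
  fixes lam :: "'v \<Rightarrow> nat \<Rightarrow> 'r::comm_ring_1"
  assumes B: "is_basis N lam (S \<union> B)" and disj: "S \<inter> B = {}" and fS: "finite S" and fB: "finite B"
    and f: "quotient_map N N' lam S f"
  shows "is_basis N' (\<lambda>u. f (lam u)) B"
proof -
  have lin: "linmap N N' f" using f by (rule quotient_map_linmap)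
  have lv: "lam u \<in> vecs N" if "u \<in> S \<union> B" for u using is_basis_vecs[OF B _ that] fS fB by blast
  have lcB: "lincomb (\<lambda>u. f (lam u)) B c = f (lincomb lam B c)" for c
    by (rule linmap_lincomb[OF lin fB, symmetric]) (use lv in auto)
  show ?thesis unfolding is_basis_def bij_betw_def
  proof (intro conjI)
    show "inj_on (lincomb (\<lambda>u. f (lam u)) B) {c. \<forall>u. u \<notin> B \<longrightarrow> c u = 0}"
    proof (rule inj_onI)
      fix c c' assume c: "c \<in> {c. \<forall>u. u \<notin> B \<longrightarrow> c u = 0}" and c': "c' \<in> {c. \<forall>u. u \<notin> B \<longrightarrow> c u = 0}"
        and eq: "lincomb (\<lambda>u. f (lam u)) B c = lincomb (\<lambda>u. f (lam u)) B c'"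
      have "f (lincomb lam B (\<lambda>u. c u - c' u)) = (\<lambda>k. 0)"
        using eq unfolding lcB lincomb_diff by (simp add: linmap_diff[OF lin] lincomb_vecs lv)
      moreover have "lincomb lam B (\<lambda>u. c u - c' u) \<in> vecs N" using lv by auto
      ultimately have "lincomb lam B (\<lambda>u. c u - c' u) \<in> rspan lam S"
        using quotient_map_kernel[OF f] by blast
      then have "c u - c' u = 0" if "u \<in> B" for u by (rule is_basis_independent_mod[OF B disj fS fB _ that])
      then show "c = c'" using c c' by (auto simp: fun_eq_iff) (metis eq_iff_diff_eq_0)
    qed
  next
    show "lincomb (\<lambda>u. f (lam u)) B ` {c. \<forall>u. u \<notin> B \<longrightarrow> c u = 0} = vecs N'"
    proof (intro equalityI subsetI)
      fix y assume "y \<in> lincomb (\<lambda>u. f (lam u)) B ` {c. \<forall>u. u \<notin> B \<longrightarrow> c u = 0}"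
      then show "y \<in> vecs N'" using lcB linmap_vecs[OF lin] lv by (auto intro!: lincomb_vecs)
    next
      fix y :: "nat \<Rightarrow> 'r" assume y: "y \<in> vecs N'"
      then obtain x where x: "x \<in> vecs N" "f x = y" using quotient_map_surj[OF f] by blast
      obtain c where c: "lincomb lam (S \<union> B) c = x" using is_basis_coords[OF B x(1)] by auto
      have sp: "lincomb lam S c \<in> vecs N" "lincomb lam B c \<in> vecs N" using lv by auto
      have "f (lincomb lam S c) = (\<lambda>k. 0)" using quotient_map_kernel[OF f sp(1)] by (auto intro: rspanI)
      then have "y = f (lincomb lam B c)"
        using x c lincomb_union[OF fS fB disj, of lam c] linmap_add[OF lin sp] by auto
      also have "\<dots> = lincomb (\<lambda>u. f (lam u)) B (\<lambda>u. if u \<in> B then c u else 0)"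
        unfolding lcB by (rule arg_cong[where f=f], rule lincomb_cong) auto
      finally show "y \<in> lincomb (\<lambda>u. f (lam u)) B ` {c. \<forall>u. u \<notin> B \<longrightarrow> c u = 0}" by auto
    qed
  qed
qed

lemma projK_iff_quotient_map:
  fixes lam :: "'v \<Rightarrow> nat \<Rightarrow> 'r::comm_ring_1"
  assumes lv: "\<forall>i\<in>{1..m}. lam (iota i) \<in> vecs N"
  shows "mu \<in> projK n m N lam S iota \<longleftrightarrow> (\<forall>i. i \<notin> {1..m} \<longrightarrow> mu i = (\<lambda>k. 0)) \<and>
     (\<exists>f. quotient_map N n lam S f \<and> (\<forall>i\<in>{1..m}. mu i = f (lam (iota i))))"
proof
  assume "mu \<in> projK n m N lam S iota"
  then obtain \<phi> where mu: "\<forall>i. i \<notin> {1..m} \<longrightarrow> mu i = (\<lambda>k. 0)"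
    and ph: "mv n N \<phi> ` vecs N = vecs n" "{x \<in> vecs N. mv n N \<phi> x = (\<lambda>k. 0)} = rspan lam S"
       "\<forall>i\<in>{1..m}. mu i = mv n N \<phi> (lam (iota i))"
    unfolding projK_def by blast
  have "quotient_map N n lam S (mv n N \<phi>)"
    unfolding quotient_map_def
  proof (intro conjI)
    show "\<forall>y\<in>vecs n. \<exists>x\<in>vecs N. mv n N \<phi> x = y" using ph(1) by (metis imageE)
  qed (use linmap_mv ph(2) in blast)+
  then show "(\<forall>i. i \<notin> {1..m} \<longrightarrow> mu i = (\<lambda>k. 0)) \<and>
     (\<exists>f. quotient_map N n lam S f \<and> (\<forall>i\<in>{1..m}. mu i = f (lam (iota i))))" using mu ph(3) by blast
next
  assume "(\<forall>i. i \<notin> {1..m} \<longrightarrow> mu i = (\<lambda>k. 0)) \<and>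
     (\<exists>f. quotient_map N n lam S f \<and> (\<forall>i\<in>{1..m}. mu i = f (lam (iota i))))"
  then obtain f where mu: "\<forall>i. i \<notin> {1..m} \<longrightarrow> mu i = (\<lambda>k. 0)" and f: "quotient_map N n lam S f"
    and mui: "\<forall>i\<in>{1..m}. mu i = f (lam (iota i))" by blast
  obtain M where M: "\<forall>x\<in>vecs N. mv n N M x = f x"
    using linmap_eq_mv[OF quotient_map_linmap[OF f]] by blast
  have "mv n N M ` vecs N = vecs n"
  proof (intro equalityI subsetI)
    fix y :: "nat \<Rightarrow> 'r" assume "y \<in> vecs n" then show "y \<in> mv n N M ` vecs N"
      using quotient_map_surj[OF f] M by (metis image_eqI)
  qed auto
  moreover have "{x \<in> vecs N. mv n N M x = (\<lambda>k. 0)} = rspan lam S"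
    using f M unfolding quotient_map_def by auto
  moreover have "\<forall>i\<in>{1..m}. mu i = mv n N M (lam (iota i))" using mui M lv by auto
  ultimately show "mu \<in> projK n m N lam S iota" unfolding projK_def using mu by blast
qed

lemma quotient_map_rspan_preimage:
  fixes Lam :: "'v \<Rightarrow> nat \<Rightarrow> 'r::comm_ring_1"
  assumes M: "quotient_map N N' Lam \<tau> M" and f\<tau>: "finite \<tau>" and f\<sigma>: "finite \<sigma>"
    and disj: "\<tau> \<inter> \<sigma> = {}" and Lv: "\<And>u. u \<in> \<tau> \<union> \<sigma> \<Longrightarrow> Lam u \<in> vecs N" and x: "x \<in> vecs N"
  shows "M x \<in> rspan (\<lambda>u. M (Lam u)) \<sigma> \<longleftrightarrow> x \<in> rspan Lam (\<tau> \<union> \<sigma>)"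
proof -
  have lin: "linmap N N' M" using M by (rule quotient_map_linmap)
  have img: "rspan (\<lambda>u. M (Lam u)) \<sigma> = M ` rspan Lam \<sigma>"
    by (rule rspan_linmap_image[OF lin f\<sigma>]) (use Lv in blast)
  have sp: "rspan Lam \<tau> \<subseteq> vecs N" "rspan Lam \<sigma> \<subseteq> vecs N" using Lv by (auto intro!: rspan_vecs)
  show ?thesis
  proof
    assume "M x \<in> rspan (\<lambda>u. M (Lam u)) \<sigma>"
    then obtain z where z: "z \<in> rspan Lam \<sigma>" "M x = M z" using img by auto
    have zv: "z \<in> vecs N" using z(1) sp by blast
    have "M (\<lambda>k. x k - z k) = (\<lambda>k. 0)" using linmap_diff[OF lin x zv] z(2) by simp
    then have "(\<lambda>k. x k - z k) \<in> rspan Lam \<tau>" using quotient_map_kernel[OF M vecs_diff[OF x zv]] by simp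
    moreover have "x = (\<lambda>k. (x k - z k) + z k)" by simp
    ultimately show "x \<in> rspan Lam (\<tau> \<union> \<sigma>)"
      unfolding rspan_union[OF f\<tau> f\<sigma> disj] using z(1)
      by (intro bexI[of _ "\<lambda>k. x k - z k"] bexI[of _ z]) auto
  next
    assume "x \<in> rspan Lam (\<tau> \<union> \<sigma>)"
    then obtain y z where yz: "y \<in> rspan Lam \<tau>" "z \<in> rspan Lam \<sigma>" "x = (\<lambda>k. y k + z k)"
      unfolding rspan_union[OF f\<tau> f\<sigma> disj] by blast
    have yv: "y \<in> vecs N" and zv: "z \<in> vecs N" using yz sp by blast+
    have "M y = (\<lambda>k. 0)" using quotient_map_kernel[OF M yv] yz(1) by simp
    then have "M x = M z" using linmap_add[OF lin yv zv] yz(3) by simp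
    then show "M x \<in> rspan (\<lambda>u. M (Lam u)) \<sigma>" using img yz(2) by simp
  qed
qed

lemma quotient_map_compose:
  fixes Lam :: "'v \<Rightarrow> nat \<Rightarrow> 'r::comm_ring_1"
  assumes M: "quotient_map N N' Lam \<tau> M" and f\<tau>: "finite \<tau>" and f\<sigma>: "finite \<sigma>"
    and disj: "\<tau> \<inter> \<sigma> = {}" and Lv: "\<And>u. u \<in> \<tau> \<union> \<sigma> \<Longrightarrow> Lam u \<in> vecs N"
    and \<chi>: "quotient_map N' n (\<lambda>u. M (Lam u)) \<sigma> \<chi>"
  shows "quotient_map N n Lam (\<tau> \<union> \<sigma>) (\<lambda>x. \<chi> (M x))"
  unfolding quotient_map_def
proof (intro conjI ballI)
  have lin: "linmap N N' M" using M by (rule quotient_map_linmap)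
  show "linmap N n (\<lambda>x. \<chi> (M x))" using linmap_comp[OF lin quotient_map_linmap[OF \<chi>]] .
  show "rspan Lam (\<tau> \<union> \<sigma>) \<subseteq> vecs N" using Lv by (rule rspan_vecs)
next
  fix y :: "nat \<Rightarrow> 'r" assume "y \<in> vecs n"
  then obtain x' where x': "x' \<in> vecs N'" "\<chi> x' = y" using quotient_map_surj[OF \<chi>] by blast
  then obtain x where "x \<in> vecs N" "M x = x'" using quotient_map_surj[OF M] by blast
  then show "\<exists>x\<in>vecs N. \<chi> (M x) = y" using x' by blast
next
  fix x :: "nat \<Rightarrow> 'r" assume x: "x \<in> vecs N"
  show "\<chi> (M x) = (\<lambda>k. 0) \<longleftrightarrow> x \<in> rspan Lam (\<tau> \<union> \<sigma>)"
    using quotient_map_kernel[OF \<chi> quotient_map_vecs[OF M x]]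
      quotient_map_rspan_preimage[OF M f\<tau> f\<sigma> disj Lv x] by simp
qed

lemma quotient_map_factor:
  fixes Lam :: "'v \<Rightarrow> nat \<Rightarrow> 'r::comm_ring_1"
  assumes M: "quotient_map N N' Lam \<tau> M" and f\<tau>: "finite \<tau>" and f\<sigma>: "finite \<sigma>"
    and disj: "\<tau> \<inter> \<sigma> = {}" and Lv: "\<And>u. u \<in> \<tau> \<union> \<sigma> \<Longrightarrow> Lam u \<in> vecs N"
    and \<phi>: "quotient_map N n Lam (\<tau> \<union> \<sigma>) \<phi>"
  shows "\<exists>\<chi>. quotient_map N' n (\<lambda>u. M (Lam u)) \<sigma> \<chi> \<and> (\<forall>x\<in>vecs N. \<chi> (M x) = \<phi> x)"
proof -
  have lin: "linmap N N' M" and pl: "linmap N n \<phi>" using M \<phi> by (blast intro: quotient_map_linmap)+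
  obtain s where sl: "linmap N' N s" and sr: "\<And>y. y \<in> vecs N' \<Longrightarrow> M (s y) = y"
    using linmap_right_inverse[OF lin] quotient_map_surj[OF M] by blast
  have \<phi>s: "\<phi> (s (M x)) = \<phi> x" if x: "x \<in> vecs N" for x
  proof -
    have smx: "s (M x) \<in> vecs N" using linmap_vecs[OF sl linmap_vecs[OF lin x]] .
    have "M (\<lambda>k. s (M x) k - x k) = (\<lambda>k. 0)"
      using linmap_diff[OF lin smx x] sr[OF linmap_vecs[OF lin x]] by simp
    then have "(\<lambda>k. s (M x) k - x k) \<in> rspan Lam \<tau>" using quotient_map_kernel[OF M vecs_diff[OF smx x]] by simp
    also have "rspan Lam \<tau> \<subseteq> rspan Lam (\<tau> \<union> \<sigma>)" using f\<tau> f\<sigma> by (intro rspan_mono) auto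
    finally have "\<phi> (\<lambda>k. s (M x) k - x k) = (\<lambda>k. 0)" using quotient_map_kernel[OF \<phi> vecs_diff[OF smx x]] by simp
    then show ?thesis using linmap_diff[OF pl smx x] by (simp add: fun_eq_iff)
  qed
  have "quotient_map N' n (\<lambda>u. M (Lam u)) \<sigma> (\<lambda>y. \<phi> (s y))"
    unfolding quotient_map_def
  proof (intro conjI ballI)
    show "linmap N' n (\<lambda>y. \<phi> (s y))" by (rule linmap_comp[OF sl pl])
    show "rspan (\<lambda>u. M (Lam u)) \<sigma> \<subseteq> vecs N'" using Lv linmap_vecs[OF lin] by (intro rspan_vecs) blast
  next
    fix y :: "nat \<Rightarrow> 'r" assume "y \<in> vecs n"
    then obtain x where "x \<in> vecs N" "\<phi> x = y" using quotient_map_surj[OF \<phi>] by blast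
    then show "\<exists>x\<in>vecs N'. \<phi> (s x) = y" using \<phi>s linmap_vecs[OF lin] by (intro bexI[of _ "M x"]) auto
  next
    fix y :: "nat \<Rightarrow> 'r" assume y: "y \<in> vecs N'"
    have sy: "s y \<in> vecs N" using linmap_vecs[OF sl y] .
    show "\<phi> (s y) = (\<lambda>k. 0) \<longleftrightarrow> y \<in> rspan (\<lambda>u. M (Lam u)) \<sigma>"
      using quotient_map_kernel[OF \<phi> sy] quotient_map_rspan_preimage[OF M f\<tau> f\<sigma> disj Lv sy] sr[OF y]
      by simp
  qed
  then show ?thesis using \<phi>s by blast
qed

lemma projK_compose:
  fixes Lam :: "'v \<Rightarrow> nat \<Rightarrow> 'r::comm_ring_1" and \<mu> :: "'w \<Rightarrow> nat \<Rightarrow> 'r"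
  assumes M: "quotient_map N N' Lam \<tau> M"
    and f\<tau>: "finite \<tau>" and f\<sigma>: "finite \<sigma>" and g: "inj_on g \<sigma>" and disj: "\<tau> \<inter> g ` \<sigma> = {}"
    and Lv: "\<And>u. u \<in> \<tau> \<union> g ` \<sigma> \<Longrightarrow> Lam u \<in> vecs N" and Li: "\<forall>i\<in>{1..m}. Lam (g (\<iota> i)) \<in> vecs N"
    and \<mu>: "\<forall>v\<in>\<sigma>. \<mu> v = M (Lam (g v))" and mui: "\<forall>i\<in>{1..m}. \<mu> (\<iota> i) = M (Lam (g (\<iota> i)))"
  shows "projK n m N' \<mu> \<sigma> \<iota> = projK n m N Lam (\<tau> \<union> g ` \<sigma>) (\<lambda>i. g (\<iota> i))"
proof -
  have lin: "linmap N N' M" using M by (rule quotient_map_linmap)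
  have fg: "finite (g ` \<sigma>)" using f\<sigma> by simp
  have "rspan \<mu> \<sigma> = rspan (\<lambda>v. M (Lam (g v))) \<sigma>"
    unfolding rspan_def using lincomb_cong_vectors[of \<sigma> \<mu>] \<mu> by auto
  also have "\<dots> = rspan (\<lambda>u. M (Lam u)) (g ` \<sigma>)" using rspan_reindex[OF g, of "\<lambda>u. M (Lam u)"] by simp
  finally have sp: "quotient_map N' n \<mu> \<sigma> \<chi> \<longleftrightarrow> quotient_map N' n (\<lambda>u. M (Lam u)) (g ` \<sigma>) \<chi>" for \<chi>
    by (rule quotient_map_rspan_cong)
  have "(\<exists>\<chi>. quotient_map N' n \<mu> \<sigma> \<chi> \<and> (\<forall>i\<in>{1..m}. nu i = \<chi> (\<mu> (\<iota> i)))) \<longleftrightarrow>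
     (\<exists>\<phi>. quotient_map N n Lam (\<tau> \<union> g ` \<sigma>) \<phi> \<and> (\<forall>i\<in>{1..m}. nu i = \<phi> (Lam (g (\<iota> i)))))"
    (is "?L \<longleftrightarrow> ?R") for nu
  proof
    assume ?L
    then obtain \<chi> where "quotient_map N' n (\<lambda>u. M (Lam u)) (g ` \<sigma>) \<chi>" "\<forall>i\<in>{1..m}. nu i = \<chi> (\<mu> (\<iota> i))"
      unfolding sp by blast
    then show ?R using quotient_map_compose[OF M f\<tau> fg disj Lv] mui by auto
  next
    assume ?R
    then obtain \<phi> where \<phi>: "quotient_map N n Lam (\<tau> \<union> g ` \<sigma>) \<phi>" "\<forall>i\<in>{1..m}. nu i = \<phi> (Lam (g (\<iota> i)))"
      by blast
    obtain \<chi> where "quotient_map N' n (\<lambda>u. M (Lam u)) (g ` \<sigma>) \<chi>" "\<forall>x\<in>vecs N. \<chi> (M x) = \<phi> x"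
      using quotient_map_factor[OF M f\<tau> fg disj Lv \<phi>(1)] by blast
    then show ?L unfolding sp using \<phi>(2) mui Li by auto
  qed
  moreover have "\<forall>i\<in>{1..m}. \<mu> (\<iota> i) \<in> vecs N'" using mui Li linmap_vecs[OF lin] by auto
  ultimately show ?thesis
    by (intro set_eqI)
      (simp only: projK_iff_quotient_map[where lam = \<mu> and iota = \<iota>]
        projK_iff_quotient_map[where lam = Lam and iota = "\<lambda>i. g (\<iota> i)", OF Li])
qed

lemma linfun_lincomb_dual:
  assumes \<psi>: "linfun N \<psi>" and fT: "finite T" and Tv: "\<And>u. u \<in> T \<Longrightarrow> lam u \<in> vecs N"
    and dual: "\<And>u. u \<in> T \<Longrightarrow> \<psi> (lam u) = (if u = t then 1 else 0)" and t: "t \<in> T"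
  shows "\<psi> (lincomb lam T c) = c t"
proof -
  have "\<psi> (lincomb lam T c) = (\<Sum>u\<in>T. c u * (if u = t then 1 else 0))"
    using linfun_lincomb[OF \<psi> fT Tv] dual by simp
  also have "\<dots> = (\<Sum>u\<in>T. if u = t then c u else 0)" by (rule sum.cong) auto
  also have "\<dots> = c t" using fT t by simp
  finally show ?thesis .
qed

lemma lincomb_vanishing_subset:
  assumes "finite T" "S \<subseteq> T" "\<forall>u\<in>S. c u = 0"
  shows "lincomb lam T c = lincomb lam (T - S) c"
  unfolding lincomb_def by (rule ext, rule sum.mono_neutral_right) (use assms in auto)

context
  fixes lam :: "'v \<Rightarrow> nat \<Rightarrow> 'r::comm_ring_1" and T :: "'v set" and tag :: "nat \<Rightarrow> 'v"
    and \<psi> :: "nat \<Rightarrow> (nat \<Rightarrow> 'r) \<Rightarrow> 'r" and N n d :: nat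
  assumes fT: "finite T" and Tv: "\<And>u. u \<in> T \<Longrightarrow> lam u \<in> vecs N"
    and tag: "inj_on tag {n..<n + d}" "tag ` {n..<n + d} \<subseteq> T"
    and \<psi>: "\<And>r. r \<in> {n..<n + d} \<Longrightarrow> linfun N (\<psi> r)"
    and dual: "\<And>r u. r \<in> {n..<n + d} \<Longrightarrow> u \<in> T \<Longrightarrow> \<psi> r (lam u) = (if u = tag r then 1 else 0)"
begin

lemma append_rows_lincomb: "r \<in> {n..<n + d} \<Longrightarrow> \<psi> r (lincomb lam T c) = c (tag r)"
  using linfun_lincomb_dual[OF \<psi> fT Tv dual] tag(2) by blast

lemma append_rows_surj:
  assumes \<phi>: "quotient_map N n lam T \<phi>" and y: "y \<in> vecs (n + d)"
  shows "\<exists>x\<in>vecs N. (\<lambda>r. if r < n then \<phi> x r else if r < n + d then \<psi> r x else 0) = y"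
proof -
  let ?R = "{n..<n + d}"
  have "(\<lambda>r. if r < n then y r else 0) \<in> vecs n" by (simp add: vecs_def)
  then obtain x0 where x0: "x0 \<in> vecs N" "\<phi> x0 = (\<lambda>r. if r < n then y r else 0)"
    using quotient_map_surj[OF \<phi>] by blast
  define c where "c u = (if u \<in> tag ` ?R then y (inv_into ?R tag u) - \<psi> (inv_into ?R tag u) x0 else 0)" for u
  define x where "x = (\<lambda>k. x0 k + lincomb lam T c k)"
  have lv: "lincomb lam T c \<in> vecs N" using Tv by blast
  have "\<phi> (lincomb lam T c) = (\<lambda>k. 0)"
    using quotient_map_kernel[OF \<phi> lv] by (auto intro: rspanI)
  then have "\<phi> x = \<phi> x0" unfolding x_def using linmap_add[OF quotient_map_linmap[OF \<phi>] x0(1) lv] by simp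
  moreover have "\<psi> r x = y r" if r: "r \<in> ?R" for r
    using linfun_add[OF \<psi>[OF r] x0(1) lv] append_rows_lincomb[OF r] r inv_into_f_f[OF tag(1) r]
    unfolding x_def c_def by simp
  ultimately have "(\<lambda>r. if r < n then \<phi> x r else if r < n + d then \<psi> r x else 0) = y"
    using x0(2) y by (auto simp: fun_eq_iff vecs_def)
  moreover have "x \<in> vecs N" unfolding x_def using x0(1) lv by blast
  ultimately show ?thesis by blast
qed

lemma quotient_map_append_rows:
  assumes \<phi>: "quotient_map N n lam T \<phi>"
  shows "quotient_map N (n + d) lam (T - tag ` {n..<n + d})
           (\<lambda>x r. if r < n then \<phi> x r else if r < n + d then \<psi> r x else 0)"
    (is "quotient_map N (n + d) lam ?T' ?M")
proof -
  let ?R = "{n..<n + d}"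
  have pl: "linmap N n \<phi>" using \<phi> by (rule quotient_map_linmap)
  have lcT: "lincomb lam T c = lincomb lam ?T' c" if "\<forall>u\<in>tag ` ?R. c u = 0" for c
    using lincomb_vanishing_subset[OF fT tag(2) that] .
  show ?thesis
    unfolding quotient_map_def
  proof (intro conjI ballI)
    show "linmap N (n + d) ?M"
      using pl \<psi> unfolding linmap_def linfun_def vecs_def by (auto simp: fun_eq_iff)
    show "rspan lam ?T' \<subseteq> vecs N" using Tv by (intro rspan_vecs) blast
    show "\<exists>x\<in>vecs N. ?M x = y" if "y \<in> vecs (n + d)" for y using append_rows_surj[OF \<phi> that] .
  next
    fix x :: "nat \<Rightarrow> 'r" assume x: "x \<in> vecs N"
    show "?M x = (\<lambda>k. 0) \<longleftrightarrow> x \<in> rspan lam ?T'"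
    proof
      assume Mx: "?M x = (\<lambda>k. 0)"
      have "\<phi> x r = 0" for r
        using fun_cong[OF Mx, of r] linmap_vecs[OF pl x] by (cases "r < n") (auto simp: vecs_def)
      then have "\<phi> x = (\<lambda>k. 0)" by auto
      then have "x \<in> rspan lam T" using quotient_map_kernel[OF \<phi> x] by simp
      then obtain c where c: "x = lincomb lam T c" by (rule rspanE)
      have "c (tag r) = 0" if "r \<in> ?R" for r
        using fun_cong[OF Mx, of r] append_rows_lincomb[OF that] that c by simp
      then have "x = lincomb lam ?T' c" using c lcT[of c] by simp
      then show "x \<in> rspan lam ?T'" by (intro rspanI) simp
    next
      assume "x \<in> rspan lam ?T'"
      then obtain c where c0: "x = lincomb lam ?T' c" by (rule rspanE)
      define c' where "c' u = (if u \<in> ?T' then c u else 0)" for u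
      have "lincomb lam ?T' c = lincomb lam ?T' c'" by (rule lincomb_cong) (simp add: c'_def)
      also have "\<dots> = lincomb lam T c'" by (rule lcT[symmetric]) (auto simp: c'_def)
      finally have c: "x = lincomb lam T c'" using c0 by simp
      then have "x \<in> rspan lam T" by (intro rspanI) simp
      then have "\<phi> x = (\<lambda>k. 0)" using quotient_map_kernel[OF \<phi> x] by simp
      moreover have "\<psi> r x = 0" if "r \<in> ?R" for r using append_rows_lincomb[OF that] that c by (simp add: c'_def)
      ultimately show "?M x = (\<lambda>k. 0)" by (auto simp: fun_eq_iff)
    qed
  qed
qed

end

section \<open>The complex K(J)\<close>

lemma star_shaped_sphereD:
  assumes "star_shaped_sphere n m K"
  shows "K \<subseteq> Pow {1..m}" "{} \<in> K" "\<And>\<sigma> \<tau>. \<sigma> \<in> K \<Longrightarrow> \<tau> \<subseteq> \<sigma> \<Longrightarrow> \<tau> \<in> K"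
    "\<And>i. i \<in> {1..m} \<Longrightarrow> {i} \<in> K" "\<exists>\<sigma>\<in>K. card \<sigma> = n"
proof -
  have "simplicial_complex_on m K"
    using assms unfolding star_shaped_sphere_def by (elim conjE) assumption
  then show "K \<subseteq> Pow {1..m}" "{} \<in> K" "\<And>\<sigma> \<tau>. \<sigma> \<in> K \<Longrightarrow> \<tau> \<subseteq> \<sigma> \<Longrightarrow> \<tau> \<in> K"
    "\<And>i. i \<in> {1..m} \<Longrightarrow> {i} \<in> K"
    unfolding simplicial_complex_on_def by blast+
  show "\<exists>\<sigma>\<in>K. card \<sigma> = n"
    using assms unfolding star_shaped_sphere_def by (elim conjE) assumption
qed

lemma star_shaped_sphere_face_finite: "star_shaped_sphere n m K \<Longrightarrow> F \<in> K \<Longrightarrow> finite F"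
  using star_shaped_sphereD(1) by (meson PowD finite_atLeastAtMost finite_subset subsetD)

lemma minimal_nonfaceD:
  assumes K: "star_shaped_sphere n m K" and \<tau>: "minimal_nonface m K \<tau>"
  shows "\<tau> \<noteq> {}" "\<tau> \<subseteq> {1..m}" "\<tau> \<notin> K"
  using \<tau> star_shaped_sphereD(2)[OF K] unfolding minimal_nonface_def by auto

lemma VJ_iff: "(i, c) \<in> VJ m J \<longleftrightarrow> i \<in> {1..m} \<and> 1 \<le> c \<and> c \<le> J i"
  unfolding VJ_def by simp

lemma finite_VJ: "finite (VJ m J)"
proof -
  have "J i \<le> Max (J ` {1..m})" if "i \<in> {1..m}" for i by (rule Max_ge) (use that in auto)
  then have "VJ m J \<subseteq> {1..m} \<times> {1..Max (J ` {1..m})}"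
    unfolding VJ_def by (force intro: order_trans)
  then show ?thesis by (rule finite_subset) auto
qed

lemma KJ_subset_VJ: "\<sigma> \<in> KJ m K J \<Longrightarrow> \<sigma> \<subseteq> VJ m J"
  unfolding KJ_def by auto

lemma IJ_VJ: "\<alpha> \<in> IJ m J \<Longrightarrow> i \<in> {1..m} \<Longrightarrow> (i, \<alpha> i) \<in> VJ m J"
  unfolding IJ_def VJ_def by auto

lemma one_idx_upd_IJ:
  "\<forall>i\<in>{1..m}. 1 \<le> J i \<Longrightarrow> k \<in> {1..m} \<Longrightarrow> 1 \<le> b \<Longrightarrow> b \<le> J k \<Longrightarrow> one_idx(k := b) \<in> IJ m J"
  unfolding IJ_def one_idx_def by auto

lemma one_idx_IJ: "\<forall>i\<in>{1..m}. 1 \<le> J i \<Longrightarrow> one_idx \<in> IJ m J"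
  unfolding IJ_def one_idx_def by auto

lemma sigmaJ_iff: "(i, c) \<in> sigmaJ m J \<alpha> \<longleftrightarrow> (i, c) \<in> VJ m J \<and> c \<noteq> \<alpha> i"
  unfolding sigmaJ_def VJ_def by blast

lemma sigmaJ_subset_VJ: "sigmaJ m J \<alpha> \<subseteq> VJ m J"
  unfolding sigmaJ_def by auto

lemma finite_sigmaJ: "finite (sigmaJ m J \<alpha>)"
  using finite_subset[OF sigmaJ_subset_VJ finite_VJ] .

text \<open>sigmaJ m J one_idx is the face \<sigma>(1) spanned by all vertices i_c with c \<ge> 2.\<close>
lemma sigmaJ_one_idx: "sigmaJ m J one_idx = Sigma {1..m} (\<lambda>i. {2..J i})"
  unfolding sigmaJ_def VJ_def one_idx_def by auto

lemma card_sigmaJ_one_idx: "card (sigmaJ m J one_idx) = NJ n m J - n"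
  unfolding sigmaJ_one_idx NJ_def by (simp add: card_SigmaI)

lemma sigmaJ_one_idx_upd:
  assumes "k \<in> {1..m}" "2 \<le> b" "b \<le> J k"
  shows "sigmaJ m J (one_idx(k := b)) = (sigmaJ m J one_idx - {(k, b)}) \<union> {(k, 1)}"
  using assms by (auto simp: sigmaJ_def VJ_def one_idx_def)

definition lifted_facet :: "nat \<Rightarrow> (nat \<Rightarrow> nat) \<Rightarrow> nat set \<Rightarrow> (nat \<times> nat) set" where
  "lifted_facet m J F = sigmaJ m J one_idx \<union> (\<lambda>i. (i, 1)) ` F"

lemma lifted_facet_KJ:
  assumes K: "star_shaped_sphere n m K" and J: "\<forall>i\<in>{1..m}. 1 \<le> J i" and F: "F \<in> K"
  shows "lifted_facet m J F \<in> KJ m K J"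
proof -
  have Fm: "F \<subseteq> {1..m}" using star_shaped_sphereD(1)[OF K] F by auto
  have "lifted_facet m J F \<subseteq> VJ m J"
    unfolding lifted_facet_def sigmaJ_one_idx using Fm J by (auto simp: VJ_def)
  moreover have "\<not> (\<Union>i\<in>\<tau>. {(i, k) | k. 1 \<le> k \<and> k \<le> J i}) \<subseteq> lifted_facet m J F"
    if \<tau>: "minimal_nonface m K \<tau>" for \<tau>
  proof
    assume sub: "(\<Union>i\<in>\<tau>. {(i, k) | k. 1 \<le> k \<and> k \<le> J i}) \<subseteq> lifted_facet m J F"
    have "\<tau> \<subseteq> F"
    proof
      fix i assume i: "i \<in> \<tau>"
      then have "i \<in> {1..m}" using minimal_nonfaceD(2)[OF K \<tau>] by auto
      then have "(i, 1) \<in> lifted_facet m J F" using sub i J by auto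
      then show "i \<in> F" unfolding lifted_facet_def sigmaJ_one_idx by auto
    qed
    then show False using star_shaped_sphereD(3)[OF K F] minimal_nonfaceD(3)[OF K \<tau>] by blast
  qed
  ultimately show ?thesis unfolding KJ_def by blast
qed

lemma card_lifted_facet:
  assumes K: "star_shaped_sphere n m K" and F: "F \<in> K" "card F = n"
  shows "card (lifted_facet m J F) = NJ n m J"
proof -
  have "finite F" using star_shaped_sphere_face_finite[OF K F(1)] .
  then have "card (lifted_facet m J F) = card (sigmaJ m J one_idx) + card ((\<lambda>i. (i, 1::nat)) ` F)"
    unfolding lifted_facet_def by (intro card_Un_disjoint) (auto simp: sigmaJ_one_idx)
  also have "card ((\<lambda>i. (i, 1::nat)) ` F) = n" using F(2) by (simp add: card_image inj_on_def)
  finally show ?thesis unfolding card_sigmaJ_one_idx[of m J n] NJ_def by simp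
qed

lemma charmap_lifted_facet_basis:
  assumes K: "star_shaped_sphere n m K" and J: "\<forall>i\<in>{1..m}. 1 \<le> J i"
    and c: "charmap (NJ n m J) (KJ m K J) Lam" and F: "F \<in> K" "card F = n"
  shows "is_basis (NJ n m J) Lam (lifted_facet m J F)"
  using c lifted_facet_KJ[OF K J F(1)] card_lifted_facet[OF K F] unfolding charmap_def by blast

lemma singleton_KJ:
  assumes K: "star_shaped_sphere n m K" and J: "\<forall>i\<in>{1..m}. 1 \<le> J i" and u: "u \<in> VJ m J"
  shows "{u} \<in> KJ m K J"
proof -
  have "\<not> (\<Union>i\<in>\<tau>. {(i, k) | k. 1 \<le> k \<and> k \<le> J i}) \<subseteq> {u}" if \<tau>: "minimal_nonface m K \<tau>" for \<tau>
  proof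
    assume sub: "(\<Union>i\<in>\<tau>. {(i, k) | k. 1 \<le> k \<and> k \<le> J i}) \<subseteq> {u}"
    obtain i where i: "i \<in> \<tau>" using minimal_nonfaceD(1)[OF K \<tau>] by auto
    have im: "i \<in> {1..m}" using minimal_nonfaceD(2)[OF K \<tau>] i by auto
    have "(i, 1) \<in> (\<Union>i\<in>\<tau>. {(i, k) | k. 1 \<le> k \<and> k \<le> J i})" using i J im by auto
    then have "(i, 1) \<in> {u}" using sub by blast
    then have "\<tau> \<subseteq> {i}" using sub J minimal_nonfaceD(2)[OF K \<tau>] by fastforce
    then have "\<tau> = {i}" using i by auto
    then show False using minimal_nonfaceD(3)[OF K \<tau>] star_shaped_sphereD(4)[OF K im] by simp
  qed
  then show ?thesis unfolding KJ_def using u by auto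
qed

lemma charmap_KJ_vecs:
  assumes K: "star_shaped_sphere n m K" and J: "\<forall>i\<in>{1..m}. 1 \<le> J i"
    and c: "charmap N (KJ m K J) Lam" and u: "u \<in> VJ m J"
  shows "Lam u \<in> vecs N"
  using c singleton_KJ[OF K J u] unfolding charmap_def by auto

section \<open>The rows of the block matrix\<close>

lemma blk_off_mono: "k \<le> k' \<Longrightarrow> blk_off n J k \<le> blk_off n J k'"
  unfolding blk_off_def by (auto intro!: sum_mono2)

lemma blk_off_Suc: "1 \<le> k \<Longrightarrow> blk_off n J (Suc k) = blk_off n J k + (J k - 1)"
proof -
  assume "1 \<le> k"
  then have "{1..<Suc k} = insert k {1..<k}" by auto
  then show ?thesis unfolding blk_off_def by simp
qed

lemma blk_off_Suc_last: "blk_off n J (Suc m) = NJ n m J"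
  unfolding blk_off_def NJ_def by (simp add: atLeastLessThanSuc_atLeastAtMost)

lemma in_row_bounds:
  assumes k: "k \<in> {1..m}" and r: "in_row n J k t r"
  shows "n \<le> r" "r < NJ n m J" "blk_off n J k \<le> r" "r < blk_off n J (Suc k)"
proof -
  have "blk_off n J (Suc k) \<le> blk_off n J (Suc m)" using k by (intro blk_off_mono) auto
  moreover have "n \<le> blk_off n J k" unfolding blk_off_def by simp
  moreover have "blk_off n J (Suc k) = blk_off n J k + (J k - 1)" using k by (intro blk_off_Suc) auto
  ultimately show "n \<le> r" "r < NJ n m J" "blk_off n J k \<le> r" "r < blk_off n J (Suc k)"
    using r unfolding in_row_def blk_off_Suc_last[symmetric] by auto
qed

lemma in_row_unique:
  assumes k: "k \<in> {1..m}" "k' \<in> {1..m}" and r: "in_row n J k t r" "in_row n J k' t' r"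
  shows "k = k' \<and> t = t'"
proof -
  have "\<not> k < k'" if "k \<in> {1..m}" "k' \<in> {1..m}" "in_row n J k t r" "in_row n J k' t' r" for k k' t t'
  proof
    assume "k < k'"
    then have "blk_off n J (Suc k) \<le> blk_off n J k'" by (intro blk_off_mono) auto
    then show False using in_row_bounds(4)[OF that(1,3)] in_row_bounds(3)[OF that(2,4)] by simp
  qed
  then have "k = k'" using assms by (meson linorder_neqE_nat)
  then show ?thesis using r unfolding in_row_def by auto
qed

lemma in_row_exists: "n \<le> r \<Longrightarrow> r < NJ n m J \<Longrightarrow> \<exists>k\<in>{1..m}. \<exists>t. in_row n J k t r"
  unfolding blk_off_Suc_last[symmetric]
proof (induction m)
  case 0
  then show ?case unfolding blk_off_def by simp
next
  case (Suc m)
  show ?case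
  proof (cases "r < blk_off n J (Suc m)")
    case True
    then show ?thesis using Suc by fastforce
  next
    case False
    have "blk_off n J (Suc (Suc m)) = blk_off n J (Suc m) + (J (Suc m) - 1)" by (rule blk_off_Suc) simp
    then have "in_row n J (Suc m) (r - blk_off n J (Suc m) + 1) r"
      unfolding in_row_def using False Suc.prems by auto
    then show ?thesis by auto
  qed
qed

lemma in_row_THE:
  assumes k: "k \<in> {1..m}" and r: "in_row n J k t r"
  shows "(THE (k', t'). k' \<in> {1..m} \<and> in_row n J k' t' r) = (k, t)"
proof (rule the_equality)
  show "case (k, t) of (k', t') \<Rightarrow> k' \<in> {1..m} \<and> in_row n J k' t' r" using k r by simp
next
  fix x assume "case x of (k', t') \<Rightarrow> k' \<in> {1..m} \<and> in_row n J k' t' r"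
  then show "x = (k, t)" using in_row_unique[OF k _ r] by (cases x) auto
qed

lemma in_row_blockLambda:
  assumes k: "k \<in> {1..m}" and r: "in_row n J k t r"
  shows "blockLambda n m J a e (i, c) r =
    (if k = i then (if c = 1 then - 1 else if c = t + 1 then 1 else 0)
     else (if c = 1 then e k (t + 1) i else 0))"
proof -
  have "(THE (k', t'). k' \<in> {1..m} \<and> in_row n J k' t' r) = (k, t)" using in_row_THE[OF k r] .
  moreover have "\<not> r < n" using in_row_bounds(1)[OF k r] by simp
  moreover have "\<exists>k\<in>{1..m}. \<exists>t. in_row n J k t r" using k r by blast
  ultimately show ?thesis unfolding blockLambda_def by simp
qed

lemma blockLambda_upper: "r < n \<Longrightarrow> blockLambda n m J a e (i, c) r = (if c = 1 then a i r else 0)"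
  unfolding blockLambda_def by simp

lemma blockLambda_vecs: "blockLambda n m J a e u \<in> vecs (NJ n m J)"
  unfolding vecs_def blockLambda_def using in_row_bounds(2)
  by (cases u) (fastforce simp: NJ_def)

text \<open>The row of \<Lambda> belonging to the vertex k_b; on the vertices of wed_k K it is the last row
  of the standard form with entries ev.\<close>
definition lambda_row :: "(nat \<Rightarrow> 'r::comm_ring_1) \<Rightarrow> nat \<Rightarrow> nat \<Rightarrow> nat \<times> nat \<Rightarrow> 'r" where
  "lambda_row ev k b = (\<lambda>(i, c). if (i, c) = (k, b) then 1 else if c = 1 then (if i = k then - 1 else ev i) else 0)"

definition row_vertex :: "nat \<Rightarrow> nat \<Rightarrow> (nat \<Rightarrow> nat) \<Rightarrow> nat \<Rightarrow> nat \<times> nat" where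
  "row_vertex n m J r = (case THE (k, t). k \<in> {1..m} \<and> in_row n J k t r of (k, t) \<Rightarrow> (k, t + 1))"

lemma row_vertex_in_row: "k \<in> {1..m} \<Longrightarrow> in_row n J k t r \<Longrightarrow> row_vertex n m J r = (k, t + 1)"
proof -
  assume k: "k \<in> {1..m}" and r: "in_row n J k t r"
  show ?thesis unfolding row_vertex_def in_row_THE[OF k r] by simp
qed

lemma bij_betw_row_vertex: "bij_betw (row_vertex n m J) {n..<NJ n m J} (sigmaJ m J one_idx)"
proof -
  have row: "\<exists>k\<in>{1..m}. \<exists>t. in_row n J k t r \<and> row_vertex n m J r = (k, t + 1)"
    if "r \<in> {n..<NJ n m J}" for r
    using in_row_exists[of n r m J] that row_vertex_in_row by fastforce
  show ?thesis
    unfolding bij_betw_def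
  proof (intro conjI inj_onI equalityI subsetI)
    fix r r' assume r: "r \<in> {n..<NJ n m J}" and r': "r' \<in> {n..<NJ n m J}"
      and eq: "row_vertex n m J r = row_vertex n m J r'"
    then show "r = r'" using row[OF r] row[OF r'] unfolding in_row_def by auto
  next
    fix u assume "u \<in> row_vertex n m J ` {n..<NJ n m J}"
    then show "u \<in> sigmaJ m J one_idx" using row unfolding sigmaJ_one_idx in_row_def by fastforce
  next
    fix u assume "u \<in> sigmaJ m J one_idx"
    then obtain k b where u: "u = (k, b)" "k \<in> {1..m}" "2 \<le> b" "b \<le> J k"
      unfolding sigmaJ_one_idx by auto
    then have r: "in_row n J k (b - 1) (blk_off n J k + (b - 2))" unfolding in_row_def by auto
    then have "blk_off n J k + (b - 2) \<in> {n..<NJ n m J}" using in_row_bounds[OF u(2) r] by simp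
    moreover have "row_vertex n m J (blk_off n J k + (b - 2)) = u"
      using row_vertex_in_row[OF u(2) r] u(1,3) by simp
    ultimately show "u \<in> row_vertex n m J ` {n..<NJ n m J}" by (metis image_eqI)
  qed
qed

lemma blockLambda_lower:
  assumes "n \<le> r" "r < NJ n m J"
  shows "blockLambda n m J a e u r =
    (case row_vertex n m J r of (k, b) \<Rightarrow> lambda_row (e k b) k b u)"
proof -
  obtain k t where k: "k \<in> {1..m}" and r: "in_row n J k t r" using in_row_exists[OF assms] by blast
  obtain i c where u: "u = (i, c)" by fastforce
  have "2 \<le> t + 1" using r unfolding in_row_def by simp
  then show ?thesis
    unfolding u in_row_blockLambda[OF k r] row_vertex_in_row[OF k r] lambda_row_def by auto
qed

lemma blockLambda_sigma_one_idx:
  assumes "n \<le> r" "r < NJ n m J" "u \<in> sigmaJ m J one_idx"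
  shows "blockLambda n m J a e u r = (if u = row_vertex n m J r then 1 else 0)"
proof -
  obtain k b where kb: "row_vertex n m J r = (k, b)" by fastforce
  obtain i c where u: "u = (i, c)" "c \<noteq> 1" using assms(3) unfolding sigmaJ_one_idx by auto
  show ?thesis using blockLambda_lower[OF assms(1,2), of a e u] kb u by (auto simp: lambda_row_def)
qed

section \<open>Realizations and standard forms\<close>

lemma realization_upper_quotient_map:
  fixes Lam :: "nat \<times> nat \<Rightarrow> nat \<Rightarrow> 'r::comm_ring_1"
  assumes J: "\<forall>i\<in>{1..m}. 1 \<le> J i" and re: "realizes n m J Lam p" and a: "a \<in> p one_idx"
    and Lv: "\<And>u. u \<in> VJ m J \<Longrightarrow> Lam u \<in> vecs (NJ n m J)"
  obtains \<phi> where "quotient_map (NJ n m J) n Lam (sigmaJ m J one_idx) \<phi>"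
    "\<forall>i\<in>{1..m}. a i = \<phi> (Lam (i, 1))" "\<forall>i. i \<notin> {1..m} \<longrightarrow> a i = (\<lambda>k. 0)"
proof -
  have "a \<in> projK n m (NJ n m J) Lam (sigmaJ m J one_idx) (\<lambda>i. (i, 1))"
    using re a one_idx_IJ[OF J] unfolding realizes_def projJ_def one_idx_def by auto
  moreover have "\<forall>i\<in>{1..m}. Lam (i, 1) \<in> vecs (NJ n m J)" using Lv J by (auto simp: VJ_def)
  ultimately show ?thesis using that by (auto simp: projK_iff_quotient_map)
qed

lemma realization_upper_basis:
  fixes Lam :: "nat \<times> nat \<Rightarrow> nat \<Rightarrow> 'r::comm_ring_1"
  assumes K: "star_shaped_sphere n m K" and J: "\<forall>i\<in>{1..m}. 1 \<le> J i"
    and c: "charmap (NJ n m J) (KJ m K J) Lam"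
    and \<phi>: "quotient_map (NJ n m J) n Lam (sigmaJ m J one_idx) \<phi>" and a: "\<forall>i\<in>{1..m}. a i = \<phi> (Lam (i, 1))"
    and F: "F \<in> K" "card F = n"
  shows "is_basis n a F"
proof -
  have Fm: "F \<subseteq> {1..m}" using star_shaped_sphereD(1)[OF K] F by auto
  have "is_basis (NJ n m J) Lam (sigmaJ m J one_idx \<union> (\<lambda>i. (i, 1)) ` F)"
    using charmap_lifted_facet_basis[OF K J c F] unfolding lifted_facet_def .
  then have "is_basis n (\<lambda>u. \<phi> (Lam u)) ((\<lambda>i. (i, 1::nat)) ` F)"
    by (rule is_basis_quotient[OF _ _ _ _ \<phi>])
      (auto simp: sigmaJ_one_idx star_shaped_sphere_face_finite[OF K F(1)])
  then have "is_basis n (\<lambda>i. \<phi> (Lam (i, 1))) F" by (rule is_basis_reindex[rotated]) (auto simp: inj_on_def)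
  then show ?thesis by (rule is_basis_cong) (use a Fm in auto)
qed

lemma stdform_vecs: "stdform n a v ev u \<in> vecs (n + 1)"
  unfolding stdform_def vecs_def by (cases u) auto

lemma stdform_quotient_map:
  fixes a :: "nat \<Rightarrow> nat \<Rightarrow> 'r::comm_ring_1"
  assumes ak: "a k \<in> vecs n"
  shows "quotient_map (n + 1) n (stdform n a k ev) {(k, 1)} (\<lambda>x r. if r < n then x r + x n * a k r else 0)"
  unfolding quotient_map_def
proof (intro conjI ballI)
  show "linmap (n + 1) n (\<lambda>x r. if r < n then x r + x n * a k r else 0)"
    unfolding linmap_def vecs_def by (auto simp: fun_eq_iff algebra_simps)
  show "rspan (stdform n a k ev) {(k, 1)} \<subseteq> vecs (n + 1)"
    by (rule rspan_vecs) (rule stdform_vecs)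
next
  fix y :: "nat \<Rightarrow> 'r" assume "y \<in> vecs n"
  then show "\<exists>x\<in>vecs (n + 1). (\<lambda>r. if r < n then x r + x n * a k r else 0) = y"
    by (intro bexI[of _ y]) (auto simp: vecs_def fun_eq_iff)
next
  fix x :: "nat \<Rightarrow> 'r" assume x: "x \<in> vecs (n + 1)"
  have v1: "stdform n a k ev (k, 1) = (\<lambda>r. if r < n then a k r else if r = n then - 1 else 0)"
    unfolding stdform_def by auto
  have "(\<lambda>r. if r < n then x r + x n * a k r else 0) = (\<lambda>k. 0) \<longleftrightarrow>
      x = (\<lambda>r. (- x n) * (if r < n then a k r else if r = n then - 1 else 0))"
    using x by (auto simp: fun_eq_iff vecs_def algebra_simps eq_neg_iff_add_eq_0 not_less le_Suc_eq)
  also have "\<dots> \<longleftrightarrow> (\<exists>c. x = (\<lambda>r. c * (if r < n then a k r else if r = n then - 1 else 0)))"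
  proof
    assume "\<exists>c. x = (\<lambda>r. c * (if r < n then a k r else if r = n then - 1 else 0))"
    then obtain c where c: "x = (\<lambda>r. c * (if r < n then a k r else if r = n then - 1 else 0))" by blast
    then have "x n = - c" by simp
    then show "x = (\<lambda>r. (- x n) * (if r < n then a k r else if r = n then - 1 else 0))" using c by simp
  qed blast
  finally show "(\<lambda>r. if r < n then x r + x n * a k r else 0) = (\<lambda>k. 0) \<longleftrightarrow>
      x \<in> rspan (stdform n a k ev) {(k, 1)}"
    unfolding rspan_singleton v1 .
qed

lemma VJ_wedJ: "k \<in> {1..m} \<Longrightarrow> VJ m (wedJ k) = (\<lambda>i. (i, 1)) ` {1..m} \<union> {(k, 2)}"
proof (rule set_eqI)
  fix x :: "nat \<times> nat" assume k: "k \<in> {1..m}"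
  obtain i c where x: "x = (i, c)" by fastforce
  show "x \<in> VJ m (wedJ k) \<longleftrightarrow> x \<in> (\<lambda>i. (i, 1)) ` {1..m} \<union> {(k, 2)}"
    unfolding x VJ_iff using k by (auto simp: wedJ_def)
qed

lemma sigmaJ_wedJ_one_idx: "k \<in> {1..m} \<Longrightarrow> sigmaJ m (wedJ k) one_idx = {(k, 2)}"
proof (rule set_eqI)
  fix x :: "nat \<times> nat" assume k: "k \<in> {1..m}"
  obtain i c where x: "x = (i, c)" by fastforce
  show "x \<in> sigmaJ m (wedJ k) one_idx \<longleftrightarrow> x \<in> {(k, 2)}"
    unfolding x sigmaJ_iff VJ_iff using k by (auto simp: wedJ_def one_idx_def)
qed

lemma sigmaJ_wedJ_one_idx_upd: "k \<in> {1..m} \<Longrightarrow> sigmaJ m (wedJ k) (one_idx(k := 2)) = {(k, 1)}"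
proof (rule set_eqI)
  fix x :: "nat \<times> nat" assume k: "k \<in> {1..m}"
  obtain i c where x: "x = (i, c)" by fastforce
  show "x \<in> sigmaJ m (wedJ k) (one_idx(k := 2)) \<longleftrightarrow> x \<in> {(k, 1)}"
    unfolding x sigmaJ_iff VJ_iff using k by (auto simp: wedJ_def one_idx_def)
qed

lemma NJ_wedJ: "k \<in> {1..m} \<Longrightarrow> NJ n m (wedJ k) = n + 1"
proof -
  assume k: "k \<in> {1..m}"
  have "(\<Sum>i\<in>{1..m}. wedJ k i - 1) = (\<Sum>i\<in>{1..m}. if i = k then 1 else 0)"
    by (rule sum.cong) (auto simp: wedJ_def)
  also have "\<dots> = 1" using k by simp
  finally show ?thesis unfolding NJ_def by simp
qed

lemma stdform_projection_v1:
  fixes a :: "nat \<Rightarrow> nat \<Rightarrow> 'r::comm_ring_1"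
  assumes av: "\<And>i. a i \<in> vecs n" and k: "k \<in> {1..m}"
  shows "(\<lambda>i. if i \<in> {1..m} then if i = k then a k else (\<lambda>r. a i r + ev i * a k r) else (\<lambda>r. 0))
    \<in> projJ n m (wedJ k) (stdform n a k ev) (one_idx(k := 2))"
proof -
  define f :: "(nat \<Rightarrow> 'r) \<Rightarrow> nat \<Rightarrow> 'r" where "f x r = (if r < n then x r + x n * a k r else 0)" for x r
  have "(if i = k then a k else (\<lambda>r. a i r + ev i * a k r)) = f (stdform n a k ev (i, (one_idx(k := 2)) i))" for i
    using av[of k] av[of i] unfolding f_def stdform_def one_idx_def by (auto simp: fun_eq_iff vecs_def)
  moreover have "quotient_map (n + 1) n (stdform n a k ev) {(k, 1)} f"
    unfolding f_def by (rule stdform_quotient_map[OF av])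
  moreover have "\<forall>i\<in>{1..m}. stdform n a k ev (i, (one_idx(k := 2)) i) \<in> vecs (n + 1)"
    using stdform_vecs by blast
  ultimately show ?thesis
    unfolding projJ_def NJ_wedJ[OF k] sigmaJ_wedJ_one_idx_upd[OF k]
    by (subst projK_iff_quotient_map) (auto intro!: exI[of _ f])
qed

text \<open>Comparing the projections of a realization from \<sigma>(1) and from \<sigma>(1(k := b)): on every
  vertex they differ by a multiple of a k, the factor being the row of \<Lambda> for k_b.\<close>
lemma upper_projections_difference:
  fixes Lam :: "nat \<times> nat \<Rightarrow> nat \<Rightarrow> 'r::comm_ring_1"
  assumes \<phi>: "quotient_map N n Lam (sigmaJ m J one_idx) \<phi>" and a: "\<forall>i\<in>{1..m}. a i = \<phi> (Lam (i, 1))"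
    and \<phi>h: "quotient_map N n Lam (sigmaJ m J (one_idx(k := b))) \<phi>h"
    and g: "\<forall>i\<in>{1..m}. \<phi>h (Lam (i, (one_idx(k := b)) i)) =
                          (if i = k then a k else (\<lambda>r. a i r + ev i * a k r))"
    and k: "k \<in> {1..m}" "2 \<le> b" and Lv: "\<And>u. u \<in> VJ m J \<Longrightarrow> Lam u \<in> vecs N"
    and u: "u \<in> VJ m J"
  shows "(\<lambda>r. \<phi>h (Lam u) r - \<phi> (Lam u) r) = (\<lambda>r. lambda_row ev k b u * a k r)"
proof -
  obtain i c where ic: "u = (i, c)" by fastforce
  have i: "i \<in> {1..m}" "1 \<le> c" using u unfolding ic VJ_iff by auto
  have \<phi>0: "\<phi> (Lam (i, c)) = (\<lambda>r. 0)" if "c \<noteq> 1"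
    using quotient_map_generator[OF \<phi> finite_sigmaJ] Lv u that i by (simp add: ic sigmaJ_iff one_idx_def)
  have \<phi>h0: "\<phi>h (Lam (i, c)) = (\<lambda>r. 0)" if "c \<noteq> (one_idx(k := b)) i"
    using quotient_map_generator[OF \<phi>h finite_sigmaJ] Lv u that by (simp add: ic sigmaJ_iff)
  consider "c = 1" "i = k" | "c = 1" "i \<noteq> k" | "(i, c) = (k, b)" | "c \<noteq> 1" "(i, c) \<noteq> (k, b)" by blast
  then show ?thesis
  proof cases
    case 1
    then show ?thesis using \<phi>h0 a i k unfolding ic lambda_row_def by (auto simp: fun_eq_iff)
  next
    case 2
    then have "\<phi>h (Lam (i, c)) = (\<lambda>r. a i r + ev i * a k r)"
      using g i(1) by (auto simp: one_idx_def dest!: bspec[of _ _ i])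
    then show ?thesis using 2 a i unfolding ic lambda_row_def by (auto simp: fun_eq_iff)
  next
    case 3
    then have "\<phi>h (Lam (i, c)) = a k" using g k(1) by (auto dest!: bspec[of _ _ k])
    then show ?thesis using 3 \<phi>0 k unfolding ic lambda_row_def by (auto simp: fun_eq_iff)
  next
    case 4
    then show ?thesis using \<phi>0 \<phi>h0 k unfolding ic lambda_row_def by (auto simp: fun_eq_iff one_idx_def)
  qed
qed

lemma std_ok_upper_projection:
  fixes Lam :: "nat \<times> nat \<Rightarrow> nat \<Rightarrow> 'r::comm_ring_1"
  assumes J: "\<forall>i\<in>{1..m}. 1 \<le> J i" and Lv: "\<And>u. u \<in> VJ m J \<Longrightarrow> Lam u \<in> vecs (NJ n m J)"
    and re: "realizes n m J Lam p" and av: "\<And>i. a i \<in> vecs n"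
    and k: "k \<in> {1..m}" and b: "2 \<le> b" "b \<le> J k" and std: "std_ok n m K p a k b ev"
  obtains \<phi>h where "quotient_map (NJ n m J) n Lam (sigmaJ m J (one_idx(k := b))) \<phi>h"
    "\<forall>i\<in>{1..m}. \<phi>h (Lam (i, (one_idx(k := b)) i)) = (if i = k then a k else (\<lambda>r. a i r + ev i * a k r))"
proof -
  define h where "h = one_idx(k := b)"
  have h: "h \<in> IJ m J" unfolding h_def using one_idx_upd_IJ[OF J k] b by simp
  have "p h = projJ n m J Lam h" using re h unfolding realizes_def by blast
  then have "(\<lambda>i. if i \<in> {1..m} then if i = k then a k else (\<lambda>r. a i r + ev i * a k r) else (\<lambda>r. 0))
      \<in> projK n m (NJ n m J) Lam (sigmaJ m J h) (\<lambda>i. (i, h i))"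
    using stdform_projection_v1[where a = a and ev = ev, OF av k] std
    unfolding std_ok_def h_def projJ_def by simp
  moreover have "\<forall>i\<in>{1..m}. Lam (i, h i) \<in> vecs (NJ n m J)" using IJ_VJ[OF h] Lv by blast
  ultimately show ?thesis using that unfolding h_def by (auto simp: projK_iff_quotient_map)
qed

lemma std_ok_row_functional:
  fixes Lam :: "nat \<times> nat \<Rightarrow> nat \<Rightarrow> 'r::comm_ring_1"
  assumes K: "star_shaped_sphere n m K" and J: "\<forall>i\<in>{1..m}. 1 \<le> J i"
    and c: "charmap (NJ n m J) (KJ m K J) Lam" and re: "realizes n m J Lam p"
    and \<phi>: "quotient_map (NJ n m J) n Lam (sigmaJ m J one_idx) \<phi>"
    and a: "\<forall>i\<in>{1..m}. a i = \<phi> (Lam (i, 1))" and a0: "\<forall>i. i \<notin> {1..m} \<longrightarrow> a i = (\<lambda>k. 0)"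
    and k: "k \<in> {1..m}" and b: "2 \<le> b" "b \<le> J k" and std: "std_ok n m K p a k b ev"
  obtains P where "linfun (NJ n m J) P" "\<forall>u\<in>VJ m J. P (Lam u) = lambda_row ev k b u"
proof -
  define N where "N = NJ n m J"
  have Lv: "\<And>u. u \<in> VJ m J \<Longrightarrow> Lam u \<in> vecs N" unfolding N_def using charmap_KJ_vecs[OF K J c] .
  have av: "a i \<in> vecs n" for i
    using a a0 quotient_map_vecs[OF \<phi>] Lv J by (cases "i \<in> {1..m}") (auto simp: N_def VJ_def)
  obtain \<phi>h where \<phi>h: "quotient_map N n Lam (sigmaJ m J (one_idx(k := b))) \<phi>h"
    and g: "\<forall>i\<in>{1..m}. \<phi>h (Lam (i, (one_idx(k := b)) i)) = (if i = k then a k else (\<lambda>r. a i r + ev i * a k r))"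
    using std_ok_upper_projection[OF J Lv[unfolded N_def] re av k b std] unfolding N_def by blast
  obtain F where F: "F \<in> K" "card F = n" "k \<in> F" using star_shaped_sphere_pure[OF K k] by blast
  have "(if i = k then unit_vec 0 else (\<lambda>r. 0)) \<in> vecs 1" for i :: nat by auto
  then obtain L where L: "linmap n 1 L" "\<forall>i\<in>F. L (a i) = (if i = k then unit_vec 0 else (\<lambda>r. 0))"
    using is_basis_extend_linmap[OF realization_upper_basis[OF K J c \<phi> a F(1,2)]
        star_shaped_sphere_face_finite[OF K F(1)], where g = "\<lambda>i. if i = k then unit_vec 0 else (\<lambda>r. 0)"
        and N' = 1]
    by blast
  define P where "P x = L (\<lambda>r. \<phi>h x r - \<phi> x r) 0" for x
  have "linfun N P"
    unfolding P_def using \<phi> \<phi>h L(1)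
    by (intro linfun_coordinate linmap_comp[OF linmap_minus]) (auto simp: N_def quotient_map_linmap)
  moreover have "P (Lam u) = lambda_row ev k b u" if u: "u \<in> VJ m J" for u
  proof -
    have "P (Lam u) = L (\<lambda>r. lambda_row ev k b u * a k r) 0"
      unfolding P_def
      using upper_projections_difference[OF \<phi>[folded N_def] a \<phi>h g k b(1) Lv u]
      by simp
    also have "\<dots> = lambda_row ev k b u"
      using linmap_smult[OF L(1) av[of k]] L(2) F(3) by (simp add: unit_vec_def)
    finally show ?thesis .
  qed
  ultimately show ?thesis using that unfolding N_def by blast
qed

section \<open>The block matrix realizes the puzzle\<close>

lemma charmap_automorphism:
  assumes c: "charmap N L Lam" and U: "quotient_map N N Lam {} U"
    and eq: "\<And>u. u \<in> \<Union>L \<Longrightarrow> Lam' u = U (Lam u)" and fin: "\<And>\<sigma>. \<sigma> \<in> L \<Longrightarrow> finite \<sigma>"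
  shows "charmap N L Lam'"
  unfolding charmap_def
proof (intro conjI ballI impI)
  fix v assume "v \<in> \<Union>L"
  then show "Lam' v \<in> vecs N" using c eq quotient_map_vecs[OF U] unfolding charmap_def by auto
next
  fix \<sigma> assume \<sigma>: "\<sigma> \<in> L" and "card \<sigma> = N"
  then have "is_basis N Lam ({} \<union> \<sigma>)" using c unfolding charmap_def by simp
  then have "is_basis N (\<lambda>u. U (Lam u)) \<sigma>" by (rule is_basis_quotient[OF _ _ _ fin[OF \<sigma>] U]) auto
  then show "is_basis N Lam' \<sigma>" by (rule is_basis_cong) (simp add: eq[OF UnionI[OF \<sigma>]])
qed

lemma projJ_automorphism:
  fixes Lam :: "nat \<times> nat \<Rightarrow> nat \<Rightarrow> 'r::comm_ring_1"
  assumes U: "quotient_map (NJ n m J) (NJ n m J) Lam {} U"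
    and eq: "\<And>u. u \<in> VJ m J \<Longrightarrow> Lam' u = U (Lam u)"
    and Lv: "\<And>u. u \<in> VJ m J \<Longrightarrow> Lam u \<in> vecs (NJ n m J)" and \<alpha>: "\<alpha> \<in> IJ m J"
  shows "projJ n m J Lam' \<alpha> = projJ n m J Lam \<alpha>"
proof -
  have "projK n m (NJ n m J) Lam' (sigmaJ m J \<alpha>) (\<lambda>i. (i, \<alpha> i)) =
      projK n m (NJ n m J) Lam ({} \<union> id ` sigmaJ m J \<alpha>) (\<lambda>i. id (i, \<alpha> i))"
    by (rule projK_compose[OF U]) (use sigmaJ_subset_VJ[of m J \<alpha>] IJ_VJ[OF \<alpha>] Lv eq in \<open>auto simp: finite_sigmaJ\<close>)
  then show ?thesis unfolding projJ_def by simp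
qed

text \<open>Stacking the projection from \<sigma>(1) on top of the row functionals of the standard forms
  gives an automorphism of R^N carrying a realization of the puzzle to \<Lambda>.\<close>
lemma blockLambda_automorphic_image:
  fixes Lam :: "nat \<times> nat \<Rightarrow> nat \<Rightarrow> 'r::comm_ring_1"
  assumes Lv: "\<And>u. u \<in> VJ m J \<Longrightarrow> Lam u \<in> vecs (NJ n m J)"
    and \<phi>: "quotient_map (NJ n m J) n Lam (sigmaJ m J one_idx) \<phi>" and a: "\<forall>i\<in>{1..m}. a i = \<phi> (Lam (i, 1))"
    and \<psi>: "\<And>r. r \<in> {n..<NJ n m J} \<Longrightarrow>
       linfun (NJ n m J) (\<psi> r) \<and> (\<forall>u\<in>VJ m J. \<psi> r (Lam u) = blockLambda n m J a e u r)"
  obtains U where "quotient_map (NJ n m J) (NJ n m J) Lam {} U"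
    "\<forall>u\<in>VJ m J. U (Lam u) = blockLambda n m J a e u"
proof -
  define N where "N = NJ n m J"
  define T where "T = sigmaJ m J one_idx"
  have nN: "n + (N - n) = N" unfolding N_def NJ_def by simp
  have bij: "bij_betw (row_vertex n m J) {n..<n + (N - n)} T"
    using bij_betw_row_vertex[of n m J] nN unfolding T_def N_def by simp
  have TV: "T \<subseteq> VJ m J" unfolding T_def by (rule sigmaJ_subset_VJ)
  have "quotient_map N (n + (N - n)) Lam (T - row_vertex n m J ` {n..<n + (N - n)})
      (\<lambda>x r. if r < n then \<phi> x r else if r < n + (N - n) then \<psi> r x else 0)"
  proof (rule quotient_map_append_rows)
    show "quotient_map N n Lam T \<phi>" using \<phi> unfolding N_def T_def .
    show "finite T" unfolding T_def by (rule finite_sigmaJ)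
    show "\<And>u. u \<in> T \<Longrightarrow> Lam u \<in> vecs N" using TV Lv unfolding N_def by blast
    show "inj_on (row_vertex n m J) {n..<n + (N - n)}" using bij by (rule bij_betw_imp_inj_on)
    show "row_vertex n m J ` {n..<n + (N - n)} \<subseteq> T" using bij by (simp add: bij_betw_def)
    show "\<And>r. r \<in> {n..<n + (N - n)} \<Longrightarrow> linfun N (\<psi> r)" using \<psi> nN unfolding N_def by simp
    fix r u assume r: "r \<in> {n..<n + (N - n)}" and u: "u \<in> T"
    then have "\<psi> r (Lam u) = blockLambda n m J a e u r" using \<psi> TV nN unfolding N_def by auto
    then show "\<psi> r (Lam u) = (if u = row_vertex n m J r then 1 else 0)"
      using blockLambda_sigma_one_idx[of n r m J u a e] r u nN unfolding N_def T_def by simp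
  qed
  moreover have "row_vertex n m J ` {n..<n + (N - n)} = T" using bij by (simp add: bij_betw_def)
  ultimately have U: "quotient_map N N Lam {} (\<lambda>x r. if r < n then \<phi> x r else if r < N then \<psi> r x else 0)"
    unfolding nN by simp
  have "(if r < n then \<phi> (Lam u) r else if r < N then \<psi> r (Lam u) else 0) = blockLambda n m J a e u r"
    if u: "u \<in> VJ m J" for u r
  proof -
    obtain i c where ic: "u = (i, c)" by fastforce
    have "\<phi> (Lam (i, c)) = (\<lambda>r. 0)" if "c \<noteq> 1"
      using quotient_map_generator[OF \<phi> finite_sigmaJ] Lv u that by (simp add: ic sigmaJ_iff one_idx_def)
    then have "r < n \<Longrightarrow> \<phi> (Lam u) r = blockLambda n m J a e u r"
      using a u unfolding ic by (auto simp: blockLambda_upper VJ_iff)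
    moreover have "N \<le> r \<Longrightarrow> blockLambda n m J a e u r = 0"
      using blockLambda_vecs unfolding N_def vecs_def by blast
    ultimately show ?thesis using \<psi> u unfolding N_def by auto
  qed
  then show ?thesis using that U unfolding N_def by (simp add: fun_eq_iff)
qed

lemma blockLambda_realizes:
  fixes a :: "nat \<Rightarrow> nat \<Rightarrow> 'r::comm_ring_1"
  assumes K: "star_shaped_sphere n m K" and J: "\<forall>i\<in>{1..m}. 1 \<le> J i"
    and p: "realizable_puzzle n m K J p" and a: "a \<in> p one_idx"
    and e: "\<forall>v\<in>{1..m}. \<forall>b\<in>{2..J v}. std_ok n m K p a v b (e v b)"
  shows "charmap (NJ n m J) (KJ m K J) (blockLambda n m J a e) \<and> realizes n m J (blockLambda n m J a e) p"
proof -
  obtain Lam where c: "charmap (NJ n m J) (KJ m K J) Lam" and re: "realizes n m J Lam p"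
    using p unfolding realizable_puzzle_def by blast
  have Lv: "\<And>u. u \<in> VJ m J \<Longrightarrow> Lam u \<in> vecs (NJ n m J)" using charmap_KJ_vecs[OF K J c] .
  obtain \<phi> where \<phi>: "quotient_map (NJ n m J) n Lam (sigmaJ m J one_idx) \<phi>"
    and ai: "\<forall>i\<in>{1..m}. a i = \<phi> (Lam (i, 1))" and a0: "\<forall>i. i \<notin> {1..m} \<longrightarrow> a i = (\<lambda>k. 0)"
    using realization_upper_quotient_map[OF J re a Lv] by blast
  have "\<exists>P. r \<in> {n..<NJ n m J} \<longrightarrow>
      linfun (NJ n m J) P \<and> (\<forall>u\<in>VJ m J. P (Lam u) = blockLambda n m J a e u r)" for r
  proof (cases "r \<in> {n..<NJ n m J}")
    case True
    obtain k b where kb: "row_vertex n m J r = (k, b)" by fastforce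
    then have kb': "k \<in> {1..m}" "2 \<le> b" "b \<le> J k"
      using bij_betw_apply[OF bij_betw_row_vertex True] unfolding sigmaJ_one_idx by auto
    obtain P where "linfun (NJ n m J) P" "\<forall>u\<in>VJ m J. P (Lam u) = lambda_row (e k b) k b u"
      using std_ok_row_functional[OF K J c re \<phi> ai a0 kb', of "e k b"] e kb' by auto
    then show ?thesis using blockLambda_lower[of n r m J a e] True kb by auto
  qed blast
  then obtain \<psi> where \<psi>: "\<And>r. r \<in> {n..<NJ n m J} \<Longrightarrow>
      linfun (NJ n m J) (\<psi> r) \<and> (\<forall>u\<in>VJ m J. \<psi> r (Lam u) = blockLambda n m J a e u r)"
    by metis
  obtain U where U: "quotient_map (NJ n m J) (NJ n m J) Lam {} U"
    and UL: "\<forall>u\<in>VJ m J. U (Lam u) = blockLambda n m J a e u"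
    using blockLambda_automorphic_image[OF Lv \<phi> ai \<psi>] by blast
  have "charmap (NJ n m J) (KJ m K J) (blockLambda n m J a e)"
  proof (rule charmap_automorphism[OF c U])
    show "\<And>u. u \<in> \<Union> (KJ m K J) \<Longrightarrow> blockLambda n m J a e u = U (Lam u)"
      using UL KJ_subset_VJ by fastforce
    show "\<And>\<sigma>. \<sigma> \<in> KJ m K J \<Longrightarrow> finite \<sigma>"
      using KJ_subset_VJ finite_VJ by (rule finite_subset)
  qed
  moreover have "realizes n m J (blockLambda n m J a e) p"
    using re projJ_automorphism[OF U] UL Lv unfolding realizes_def by simp
  ultimately show ?thesis ..
qed

section \<open>Existence of standard forms\<close>

text \<open>The vertices of wed_k K inside K(J): v_1 = k_1 and v_2 = k_b.\<close>
definition wedge_embedding :: "nat \<Rightarrow> nat \<Rightarrow> nat \<times> nat \<Rightarrow> nat \<times> nat" where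
  "wedge_embedding k b u = (if u = (k, 2) then (k, b) else u)"

lemma inj_on_wedge_embedding:
  assumes "2 \<le> b"
  shows "inj_on (wedge_embedding k b) (VJ m (wedJ k))"
proof (rule inj_onI)
  fix u v assume "u \<in> VJ m (wedJ k)" "v \<in> VJ m (wedJ k)" "wedge_embedding k b u = wedge_embedding k b v"
  moreover have "(k, b) \<notin> VJ m (wedJ k) \<or> b = 2" using assms unfolding VJ_iff wedJ_def by auto
  ultimately show "u = v" unfolding wedge_embedding_def by (auto split: if_splits)
qed

lemma wedge_embedding_image:
  "k \<in> {1..m} \<Longrightarrow> wedge_embedding k b ` VJ m (wedJ k) = (\<lambda>i. (i, 1)) ` {1..m} \<union> {(k, b)}"
  unfolding VJ_wedJ by (auto simp: wedge_embedding_def image_iff)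

lemma KJ_wedge_lift:
  assumes K: "star_shaped_sphere n m K" and J: "\<forall>i\<in>{1..m}. 1 \<le> J i"
    and k: "k \<in> {1..m}" and b: "2 \<le> b" "b \<le> J k" and W: "W \<in> KJ m K (wedJ k)"
  shows "(sigmaJ m J one_idx - {(k, b)}) \<union> wedge_embedding k b ` W \<in> KJ m K J"
proof -
  let ?e = "wedge_embedding k b" and ?S = "sigmaJ m J one_idx - {(k, b)}"
  have WV: "W \<subseteq> VJ m (wedJ k)" using W by (rule KJ_subset_VJ)
  have eV: "?e ` VJ m (wedJ k) \<subseteq> VJ m J" and disj: "?e ` VJ m (wedJ k) \<inter> ?S = {}"
    unfolding wedge_embedding_image[OF k] using k b J by (auto simp: VJ_def sigmaJ_one_idx)
  have "\<not> (\<Union>i\<in>\<tau>. {(i, c) | c. 1 \<le> c \<and> c \<le> J i}) \<subseteq> ?S \<union> ?e ` W"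
    if \<tau>: "minimal_nonface m K \<tau>" for \<tau>
  proof
    define A where "A = (\<Union>i\<in>\<tau>. {(i, c) | c. 1 \<le> c \<and> c \<le> wedJ k i})"
    have AV: "A \<subseteq> VJ m (wedJ k)" using minimal_nonfaceD(2)[OF K \<tau>] unfolding A_def VJ_def by auto
    have "\<And>i. i \<in> \<tau> \<Longrightarrow> 1 \<le> J i" using J minimal_nonfaceD(2)[OF K \<tau>] by auto
    then have "?e ` A \<subseteq> (\<Union>i\<in>\<tau>. {(i, c) | c. 1 \<le> c \<and> c \<le> J i})"
      using b unfolding A_def
      by (auto simp: wedge_embedding_def wedJ_def split: if_splits)
    also assume "\<dots> \<subseteq> ?S \<union> ?e ` W"
    finally have "?e ` A \<subseteq> ?e ` W" using disj AV by blast
    then have "A \<subseteq> W" using inj_on_image_mem_iff[OF inj_on_wedge_embedding[OF b(1)] _ WV] AV by blast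
    then show False using W \<tau> unfolding KJ_def A_def by blast
  qed
  moreover have "?S \<union> ?e ` W \<subseteq> VJ m J" using sigmaJ_subset_VJ eV WV by blast
  ultimately show ?thesis unfolding KJ_def by blast
qed

text \<open>The last row of the standard form. It exists because k lies in a facet F, so that k_1 and
  \<sigma>(1) belong to the basis lifted from F.\<close>
lemma wedge_row_functional:
  fixes Lam :: "nat \<times> nat \<Rightarrow> nat \<Rightarrow> 'r::comm_ring_1"
  assumes K: "star_shaped_sphere n m K" and J: "\<forall>i\<in>{1..m}. 1 \<le> J i"
    and c: "charmap (NJ n m J) (KJ m K J) Lam" and k: "k \<in> {1..m}" and b: "2 \<le> b"
  obtains \<psi> where "linfun (NJ n m J) \<psi>" "\<forall>u\<in>sigmaJ m J one_idx. \<psi> (Lam u) = (if u = (k, b) then 1 else 0)"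
    "\<psi> (Lam (k, 1)) = - 1"
proof -
  obtain F where F: "F \<in> K" "card F = n" "k \<in> F" using star_shaped_sphere_pure[OF K k] by blast
  define g :: "nat \<times> nat \<Rightarrow> nat \<Rightarrow> 'r" where
    "g u = (if u = (k, b) then unit_vec 0 else if u = (k, 1) then (\<lambda>r. - unit_vec 0 r) else (\<lambda>r. 0))"
    for u
  have "g u \<in> vecs 1" for u by (simp add: g_def unit_vec_def vecs_def)
  moreover have "finite (lifted_facet m J F)"
    unfolding lifted_facet_def using finite_sigmaJ star_shaped_sphere_face_finite[OF K F(1)] by blast
  ultimately obtain f where f: "linmap (NJ n m J) 1 f" "\<forall>u\<in>lifted_facet m J F. f (Lam u) = g u"
    using is_basis_extend_linmap[OF charmap_lifted_facet_basis[OF K J c F(1,2)], where g = g and N' = 1]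
    by blast
  show ?thesis
  proof (rule that[of "\<lambda>x. f x 0"])
    show "linfun (NJ n m J) (\<lambda>x. f x 0)" by (rule linfun_coordinate[OF f(1)])
    show "\<forall>u\<in>sigmaJ m J one_idx. f (Lam u) 0 = (if u = (k, b) then 1 else 0)"
      using f(2) unfolding g_def lifted_facet_def sigmaJ_one_idx by (auto simp: unit_vec_def)
    show "f (Lam (k, 1)) 0 = - 1" using f(2) F(3) b unfolding g_def lifted_facet_def by (simp add: unit_vec_def)
  qed
qed

lemma wedge_quotient_map:
  fixes Lam :: "nat \<times> nat \<Rightarrow> nat \<Rightarrow> 'r::comm_ring_1"
  assumes K: "star_shaped_sphere n m K" and J: "\<forall>i\<in>{1..m}. 1 \<le> J i"
    and c: "charmap (NJ n m J) (KJ m K J) Lam"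
    and \<phi>: "quotient_map (NJ n m J) n Lam (sigmaJ m J one_idx) \<phi>" and a: "\<forall>i\<in>{1..m}. a i = \<phi> (Lam (i, 1))"
    and k: "k \<in> {1..m}" and b: "2 \<le> b" "b \<le> J k"
  obtains ev M where "quotient_map (NJ n m J) (n + 1) Lam (sigmaJ m J one_idx - {(k, b)}) M"
    "\<forall>u\<in>VJ m (wedJ k). stdform n a k ev u = M (Lam (wedge_embedding k b u))"
proof -
  define N where "N = NJ n m J"
  define T where "T = sigmaJ m J one_idx"
  have Lv: "\<And>u. u \<in> VJ m J \<Longrightarrow> Lam u \<in> vecs N" unfolding N_def using charmap_KJ_vecs[OF K J c] .
  have TV: "T \<subseteq> VJ m J" unfolding T_def by (rule sigmaJ_subset_VJ)
  have kb: "(k, b) \<in> T" using k b unfolding T_def sigmaJ_one_idx by simp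
  obtain \<psi> where \<psi>: "linfun N \<psi>" and \<psi>T: "\<And>u. u \<in> T \<Longrightarrow> \<psi> (Lam u) = (if u = (k, b) then 1 else 0)"
    and \<psi>k1: "\<psi> (Lam (k, 1)) = - 1"
    using wedge_row_functional[OF K J c k b(1)] unfolding N_def T_def by metis
  define M where "M x r = (if r < n then \<phi> x r else if r < n + 1 then \<psi> x else 0)" for x r
  have "quotient_map N (n + 1) Lam (T - (\<lambda>r. (k, b)) ` {n..<n + 1}) M"
    unfolding M_def
  proof (rule quotient_map_append_rows)
    show "quotient_map N n Lam T \<phi>" using \<phi> unfolding N_def T_def .
    show "finite T" unfolding T_def by (rule finite_sigmaJ)
    show "\<And>u. u \<in> T \<Longrightarrow> Lam u \<in> vecs N" using TV Lv by blast
    show "linfun N \<psi>" by (rule \<psi>)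
  qed (use kb \<psi>T in auto)
  then have "quotient_map N (n + 1) Lam (T - {(k, b)}) M" by simp
  moreover have "stdform n a k (\<lambda>i. \<psi> (Lam (i, 1))) u = M (Lam (wedge_embedding k b u))"
    if u: "u \<in> VJ m (wedJ k)" for u
  proof -
    consider i where "u = (i, 1)" "i \<in> {1..m}" | "u = (k, 2)" using u VJ_wedJ[OF k] by auto
    then show ?thesis
    proof cases
      case (1 i)
      then show ?thesis
        using a \<psi>k1 unfolding M_def stdform_def wedge_embedding_def by (auto simp: fun_eq_iff)
    next
      case 2
      have "\<phi> (Lam (k, b)) = (\<lambda>r. 0)"
        using quotient_map_generator[OF \<phi> finite_sigmaJ] kb TV Lv unfolding T_def N_def by blast
      then show ?thesis
        using 2 \<psi>T[OF kb] unfolding M_def stdform_def wedge_embedding_def by (auto simp: fun_eq_iff)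
    qed
  qed
  ultimately show ?thesis using that unfolding N_def T_def by blast
qed

lemma stdform_charmap:
  fixes Lam :: "nat \<times> nat \<Rightarrow> nat \<Rightarrow> 'r::comm_ring_1"
  assumes K: "star_shaped_sphere n m K" and J: "\<forall>i\<in>{1..m}. 1 \<le> J i"
    and c: "charmap (NJ n m J) (KJ m K J) Lam" and k: "k \<in> {1..m}" and b: "2 \<le> b" "b \<le> J k"
    and M: "quotient_map (NJ n m J) (n + 1) Lam (sigmaJ m J one_idx - {(k, b)}) M"
    and std: "\<forall>u\<in>VJ m (wedJ k). stdform n a k ev u = M (Lam (wedge_embedding k b u))"
  shows "charmap (n + 1) (KJ m K (wedJ k)) (stdform n a k ev)"
  unfolding charmap_def
proof (intro conjI ballI impI)
  fix v show "stdform n a k ev v \<in> vecs (n + 1)" by (rule stdform_vecs)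
next
  fix W assume W: "W \<in> KJ m K (wedJ k)" and cW: "card W = n + 1"
  let ?e = "wedge_embedding k b" and ?\<tau> = "sigmaJ m J one_idx - {(k, b)}"
  have WV: "W \<subseteq> VJ m (wedJ k)" using W by (rule KJ_subset_VJ)
  have fW: "finite W" using finite_subset[OF WV finite_VJ] .
  have inj: "inj_on ?e W" using inj_on_subset[OF inj_on_wedge_embedding[OF b(1)] WV] .
  have f\<tau>: "finite ?\<tau>" using finite_sigmaJ by blast
  have "?e ` W \<subseteq> (\<lambda>i. (i, 1)) ` {1..m} \<union> {(k, b)}"
    using WV wedge_embedding_image[OF k, of b] by blast
  moreover have "?\<tau> \<inter> ((\<lambda>i. (i, 1)) ` {1..m} \<union> {(k, b)}) = {}" by (auto simp: sigmaJ_one_idx)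
  ultimately have disj: "?\<tau> \<inter> ?e ` W = {}" by blast
  have kb: "(k, b) \<in> sigmaJ m J one_idx" using k b unfolding sigmaJ_one_idx by simp
  then have "1 \<le> card (sigmaJ m J one_idx)" using finite_sigmaJ by (metis One_nat_def Suc_leI card_gt_0_iff empty_iff)
  then have "card ?\<tau> + (n + 1) = NJ n m J"
    using kb finite_sigmaJ card_sigmaJ_one_idx[of m J n] by (simp add: card_Diff_singleton)
  moreover have "card (?\<tau> \<union> ?e ` W) = card ?\<tau> + card (?e ` W)"
    using f\<tau> fW disj by (intro card_Un_disjoint) auto
  moreover have "card (?e ` W) = n + 1" using card_image[OF inj] cW by simp
  ultimately have "card (?\<tau> \<union> ?e ` W) = NJ n m J" by simp
  then have "is_basis (NJ n m J) Lam (?\<tau> \<union> ?e ` W)"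
    using c KJ_wedge_lift[OF K J k b W] unfolding charmap_def by blast
  then have "is_basis (n + 1) (\<lambda>u. M (Lam u)) (?e ` W)" by (rule is_basis_quotient[OF _ disj f\<tau> _ M]) (use fW in simp)
  then have "is_basis (n + 1) (\<lambda>u. M (Lam (?e u))) W" by (rule is_basis_reindex[OF inj])
  then show "is_basis (n + 1) (stdform n a k ev) W" by (rule is_basis_cong) (use std WV in auto)
qed

lemma stdform_projections:
  fixes Lam :: "nat \<times> nat \<Rightarrow> nat \<Rightarrow> 'r::comm_ring_1"
  assumes J: "\<forall>i\<in>{1..m}. 1 \<le> J i" and Lv: "\<And>u. u \<in> VJ m J \<Longrightarrow> Lam u \<in> vecs (NJ n m J)"
    and k: "k \<in> {1..m}" and b: "2 \<le> b" "b \<le> J k"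
    and M: "quotient_map (NJ n m J) (n + 1) Lam (sigmaJ m J one_idx - {(k, b)}) M"
    and std: "\<forall>u\<in>VJ m (wedJ k). stdform n a k ev u = M (Lam (wedge_embedding k b u))"
  shows "projJ n m (wedJ k) (stdform n a k ev) one_idx = projJ n m J Lam one_idx"
    "projJ n m (wedJ k) (stdform n a k ev) (one_idx(k := 2)) = projJ n m J Lam (one_idx(k := b))"
proof -
  let ?e = "wedge_embedding k b" and ?\<tau> = "sigmaJ m J one_idx - {(k, b)}"
  have eV: "?e ` VJ m (wedJ k) \<subseteq> VJ m J" and disj: "?\<tau> \<inter> ?e ` VJ m (wedJ k) = {}"
    unfolding wedge_embedding_image[OF k] using k b J by (auto simp: VJ_def sigmaJ_one_idx)
  have stage: "projK n m (n + 1) (stdform n a k ev) {v} (\<lambda>i. (i, \<beta> i)) =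
      projK n m (NJ n m J) Lam (?\<tau> \<union> ?e ` {v}) (\<lambda>i. ?e (i, \<beta> i))"
    if v: "v \<in> VJ m (wedJ k)" and \<beta>: "\<forall>i\<in>{1..m}. (i, \<beta> i) \<in> VJ m (wedJ k)" for v \<beta>
  proof (rule projK_compose[OF M])
    show "\<And>u. u \<in> ?\<tau> \<union> ?e ` {v} \<Longrightarrow> Lam u \<in> vecs (NJ n m J)"
      using Lv sigmaJ_subset_VJ eV v by blast
    show "\<forall>i\<in>{1..m}. Lam (?e (i, \<beta> i)) \<in> vecs (NJ n m J)" using Lv eV \<beta> by blast
  qed (use v \<beta> std disj finite_sigmaJ in auto)
  have kb: "(k, b) \<in> sigmaJ m J one_idx" using k b unfolding sigmaJ_one_idx by simp
  have "?\<tau> \<union> ?e ` {(k, 2)} = sigmaJ m J one_idx" using kb by (auto simp: wedge_embedding_def)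
  moreover have "(\<lambda>i. ?e (i, one_idx i)) = (\<lambda>i. (i, one_idx i))"
    by (simp add: wedge_embedding_def one_idx_def)
  moreover have "\<forall>i\<in>{1..m}. (i, one_idx i) \<in> VJ m (wedJ k)" "(k, 2) \<in> VJ m (wedJ k)"
    using k by (auto simp: VJ_wedJ one_idx_def)
  ultimately show "projJ n m (wedJ k) (stdform n a k ev) one_idx = projJ n m J Lam one_idx"
    unfolding projJ_def NJ_wedJ[OF k] sigmaJ_wedJ_one_idx[OF k] using stage by simp
  have "?\<tau> \<union> ?e ` {(k, 1)} = sigmaJ m J (one_idx(k := b))"
    using sigmaJ_one_idx_upd[where J = J, OF k b] by (auto simp: wedge_embedding_def)
  moreover have "(\<lambda>i. ?e (i, (one_idx(k := 2)) i)) = (\<lambda>i. (i, (one_idx(k := b)) i))"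
    by (auto simp: wedge_embedding_def one_idx_def)
  moreover have "\<forall>i\<in>{1..m}. (i, (one_idx(k := 2)) i) \<in> VJ m (wedJ k)" "(k, 1) \<in> VJ m (wedJ k)"
    using k by (auto simp: VJ_wedJ one_idx_def)
  ultimately show "projJ n m (wedJ k) (stdform n a k ev) (one_idx(k := 2)) = projJ n m J Lam (one_idx(k := b))"
    unfolding projJ_def NJ_wedJ[OF k] sigmaJ_wedJ_one_idx_upd[OF k] using stage by simp
qed
lemma std_ok_exists:
  fixes a :: "nat \<Rightarrow> nat \<Rightarrow> 'r::comm_ring_1"
  assumes K: "star_shaped_sphere n m K" and J: "\<forall>i\<in>{1..m}. 1 \<le> J i"
    and p: "realizable_puzzle n m K J p" and a: "a \<in> p one_idx"
    and k: "k \<in> {1..m}" and b: "2 \<le> b" "b \<le> J k"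
  shows "\<exists>ev. std_ok n m K p a k b ev"
proof -
  obtain Lam where c: "charmap (NJ n m J) (KJ m K J) Lam" and re: "realizes n m J Lam p"
    using p unfolding realizable_puzzle_def by blast
  have Lv: "\<And>u. u \<in> VJ m J \<Longrightarrow> Lam u \<in> vecs (NJ n m J)" using charmap_KJ_vecs[OF K J c] .
  obtain \<phi> where \<phi>: "quotient_map (NJ n m J) n Lam (sigmaJ m J one_idx) \<phi>"
    and ai: "\<forall>i\<in>{1..m}. a i = \<phi> (Lam (i, 1))"
    using realization_upper_quotient_map[OF J re a Lv] by blast
  obtain ev M where M: "quotient_map (NJ n m J) (n + 1) Lam (sigmaJ m J one_idx - {(k, b)}) M"
    and std: "\<forall>u\<in>VJ m (wedJ k). stdform n a k ev u = M (Lam (wedge_embedding k b u))"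
    using wedge_quotient_map[OF K J c \<phi> ai k b] by blast
  have "p one_idx = projJ n m J Lam one_idx" "p (one_idx(k := b)) = projJ n m J Lam (one_idx(k := b))"
    using re one_idx_IJ[OF J] one_idx_upd_IJ[OF J k] b unfolding realizes_def by auto
  then have "std_ok n m K p a k b ev"
    unfolding std_ok_def using stdform_charmap[OF K J c k b M std] stdform_projections[OF J Lv k b M std]
    by simp
  then show ?thesis by blast
qed

theorem mainTheorem6:
  fixes n m :: nat and K :: "nat set set" and J :: "nat \<Rightarrow> nat"
    and p :: "(nat \<Rightarrow> nat) \<Rightarrow> (nat \<Rightarrow> nat \<Rightarrow> 'r::comm_ring_1) set"
    and a :: "nat \<Rightarrow> nat \<Rightarrow> 'r"
  assumes R: "R_ring TYPE('r)"
    and K: "star_shaped_sphere n m K"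
    and J: "\<forall>i\<in>{1..m}. 1 \<le> J i"
    and p: "realizable_puzzle n m K J p"
    and a: "a \<in> p one_idx"
  shows
    "(\<forall>v\<in>{1..m}. \<forall>b\<in>{2..J v}. \<exists>ev. std_ok n m K p a v b ev)
   \<and> (\<forall>e. (\<forall>v\<in>{1..m}. \<forall>b\<in>{2..J v}. std_ok n m K p a v b (e v b)) \<longrightarrow>
        charmap (NJ n m J) (KJ m K J) (blockLambda n m J a e) \<and>
        realizes n m J (blockLambda n m J a e) p)
   \<and> (\<forall>q. realizable_puzzle n m K J q \<and> q one_idx = p one_idx \<and>
        (\<forall>\<alpha>\<in>IJ m J. (\<exists>v\<in>{1..m}. \<alpha> v \<noteq> 1 \<and> (\<forall>i. i \<noteq> v \<longrightarrow> \<alpha> i = 1)) \<longrightarrow> q \<alpha> = p \<alpha>)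
        \<longrightarrow> (\<forall>\<alpha>\<in>IJ m J. q \<alpha> = p \<alpha>))"
proof (intro conjI allI impI)
  \<comment> \<open>the argument works over any commutative ring\<close>
  show "\<forall>v\<in>{1..m}. \<forall>b\<in>{2..J v}. \<exists>ev. std_ok n m K p a v b ev"
    using std_ok_exists[OF K J p a] by simp
  fix e assume "\<forall>v\<in>{1..m}. \<forall>b\<in>{2..J v}. std_ok n m K p a v b (e v b)"
  then show "charmap (NJ n m J) (KJ m K J) (blockLambda n m J a e)"
    "realizes n m J (blockLambda n m J a e) p"
    using blockLambda_realizes[OF K J p a] by simp_all
next
  fix q assume q: "realizable_puzzle n m K J q \<and> q one_idx = p one_idx \<and>
    (\<forall>\<alpha>\<in>IJ m J. (\<exists>v\<in>{1..m}. \<alpha> v \<noteq> 1 \<and> (\<forall>i. i \<noteq> v \<longrightarrow> \<alpha> i = 1)) \<longrightarrow> q \<alpha> = p \<alpha>)"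
  have "\<exists>ev. v \<in> {1..m} \<and> b \<in> {2..J v} \<longrightarrow> std_ok n m K p a v b ev" for v b
    using std_ok_exists[OF K J p a] by auto
  then obtain e where ep: "\<forall>v\<in>{1..m}. \<forall>b\<in>{2..J v}. std_ok n m K p a v b (e v b)"
    by metis
  have "q (one_idx(v := b)) = p (one_idx(v := b))" if "v \<in> {1..m}" "b \<in> {2..J v}" for v b
    using q one_idx_upd_IJ[OF J, of v b] that by (force simp: one_idx_def)
  then have eq: "\<forall>v\<in>{1..m}. \<forall>b\<in>{2..J v}. std_ok n m K q a v b (e v b)"
    using ep q unfolding std_ok_def by simp
  have "realizes n m J (blockLambda n m J a e) q" "realizes n m J (blockLambda n m J a e) p"
    using blockLambda_realizes[of n m K J q a e] blockLambda_realizes[OF K J p a ep] K J q a eq by auto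
  then show "\<forall>\<alpha>\<in>IJ m J. q \<alpha> = p \<alpha>" unfolding realizes_def by simp
qed

end
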